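(* For each $k\in\mathbb N$, the class of bilabelled graphs $\mathcal P_k$ is closed under taking bilabelled minors.
   Context: A $(k,k)$-bilabelled graph is $\boldsymbol F=(F,\boldsymbol u,\boldsymbol v)$, $\boldsymbol u,\boldsymbol v\in V(F)^k$. A bilabelled minor of $\boldsymbol F$ is a $(k,k)$-bilabelled graph obtained from $\boldsymbol F$ by a sequence of edge contractions, edge deletions and deletions of unlabelled vertices (labels remain on their vertices). Series composition $\boldsymbol F\cdot\boldsymbol F'$: disjoint union with $v_i$ identified with $u'_i$, multiple edges removed, labels $(\boldsymbol u,\boldsymbol v')$. Parallel composition $\boldsymbol F\odot\boldsymbol F'$: identify $u_i$ with $u'_i$, $v_i$ with $v'_i$, multiple edges removed. For $\sigma\in\mathfrak S_{2k}$, $\boldsymbol F^\sigma$ has in-labels $(w_{\sigma(1)},\dots,w_{\sigma(k)})$, out-labels $(w_{\sigma(k+1)},\dots,w_{\sigma(2k)})$, $\boldsymbol w=\boldsymbol u\boldsymbol v$. $\mathscr C_k$ = cyclic group of rotations of $(1,\dots,k,2k,\dots,k+1)$. $\boldsymbol C_k$: vertices $[2k]$, in-labels $(1,\dots,k)$, out-labels $(k+1,\dots,2k)$, edges $\{i,i+1\}$ ($i\in[2k]\setminus\{k,2k\}$), $\{1,k+1\},\{k,2k\}$; $\boldsymbol M_k$: same vertices/labels, edges $\{i,i+k\}$. $\mathcal Q_k^P,\mathcal Q_k^S$ = bilabelled minors of $\boldsymbol C_k,\boldsymbol M_k$; $\mathcal Q_k$ their union. $\mathcal P_k$ = smallest class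 containing $\mathcal Q_k$, closed under series composition, $\boldsymbol F\mapsto\boldsymbol F\odot\boldsymbol Q$ ($\boldsymbol Q\in\mathcal Q_k^P$), and $\boldsymbol F\mapsto\boldsymbol F^\sigma$ ($\sigma\in\mathscr C_k$). *)

theory Defs
  imports Main
begin

text \<open>A (k,k)-bilabelled graph: (vertex set, edge set, in-labels u, out-labels v).
  Vertices are natural numbers; an edge is a set of one (loop) or two vertices.
  Multiple edges cannot occur (edges form a set). All indices are 0-based.\<close>
type_synonym bgraph = "nat set \<times> nat set set \<times> nat list \<times> nat list"

definition bg_map :: "(nat \<Rightarrow> nat) \<Rightarrow> bgraph \<Rightarrow> bgraph" where
  "bg_map f G = (case G of (V, E, u, v) \<Rightarrow>
     (f ` V, (\<lambda>e. f ` e) ` E, map f u, map f v))"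

definition bg_iso :: "bgraph \<Rightarrow> bgraph \<Rightarrow> bool" where
  "bg_iso F G = (\<exists>f. bij_betw f (fst F) (fst G) \<and> G = bg_map f F)"

definition quot_map :: "(nat \<times> nat) set \<Rightarrow> nat \<Rightarrow> nat" where
  "quot_map R x = (LEAST y. (x, y) \<in> (R \<union> R\<inverse>)\<^sup>*)"

text \<open>Series composition: disjoint union (F on even, F' on odd numbers),
  v_i identified with u'_i, multiple edges removed, labels (u, v').\<close>
definition bg_series :: "bgraph \<Rightarrow> bgraph \<Rightarrow> bgraph" where
  "bg_series F F' = (case F of (V, E, u, v) \<Rightarrow> case F' of (V', E', u', v') \<Rightarrow>
     (let f1 = (\<lambda>x::nat. 2 * x); f2 = (\<lambda>x::nat. 2 * x + 1);
          q = quot_map (set (zip (map f1 v) (map f2 u')))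
      in (q ` (f1 ` V \<union> f2 ` V'),
          (\<lambda>e. q ` e) ` ((\<lambda>e. f1 ` e) ` E \<union> (\<lambda>e. f2 ` e) ` E'),
          map (q \<circ> f1) u, map (q \<circ> f2) v')))"

definition bg_parallel :: "bgraph \<Rightarrow> bgraph \<Rightarrow> bgraph" where
  "bg_parallel F F' = (case F of (V, E, u, v) \<Rightarrow> case F' of (V', E', u', v') \<Rightarrow>
     (let f1 = (\<lambda>x::nat. 2 * x); f2 = (\<lambda>x::nat. 2 * x + 1);
          q = quot_map (set (zip (map f1 u) (map f2 u')) \<union> set (zip (map f1 v) (map f2 v')))
      in (q ` (f1 ` V \<union> f2 ` V'),
          (\<lambda>e. q ` e) ` ((\<lambda>e. f1 ` e) ` E \<union> (\<lambda>e. f2 ` e) ` E'),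
          map (q \<circ> f1) u, map (q \<circ> f1) v)))"

text \<open>F^sigma for sigma a permutation of {0..<2k} (0-based), w = u v.\<close>
definition bg_perm :: "(nat \<Rightarrow> nat) \<Rightarrow> bgraph \<Rightarrow> bgraph" where
  "bg_perm \<sigma> F = (case F of (V, E, u, v) \<Rightarrow>
     (V, E, map (\<lambda>i. (u @ v) ! (\<sigma> i)) [0..<length u],
            map (\<lambda>i. (u @ v) ! (\<sigma> (length u + i))) [0..<length u]))"

text \<open>The cyclic order (1,...,k,2k,...,k+1), 0-based, and its group of rotations.\<close>
definition cyc_order :: "nat \<Rightarrow> nat list" where
  "cyc_order k = [0..<k] @ rev [k..<2 * k]"

definition rot_group :: "nat \<Rightarrow> (nat \<Rightarrow> nat) set" where
  "rot_group k = {\<sigma>. (\<forall>i. i \<ge> 2 * k \<longrightarrow> \<sigma> i = i) \<and>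
     (\<exists>r. \<forall>j < 2 * k. \<sigma> (cyc_order k ! j) = cyc_order k ! ((j + r) mod (2 * k)))}"

definition bgC :: "nat \<Rightarrow> bgraph" where
  "bgC k = ({0..<2 * k},
            {{i, i + 1} | i. i + 1 < k} \<union> {{i, i + 1} | i. k \<le> i \<and> i + 1 < 2 * k}
              \<union> (if 1 \<le> k then {{0, k}, {k - 1, 2 * k - 1}} else {}),
            [0..<k], [k..<2 * k])"

definition bgM :: "nat \<Rightarrow> bgraph" where
  "bgM k = ({0..<2 * k}, {{i, i + k} | i. i < k}, [0..<k], [k..<2 * k])"

inductive bminor_step :: "bgraph \<Rightarrow> bgraph \<Rightarrow> bool" where
  edel: "e \<in> E \<Longrightarrow> bminor_step (V, E, u, v) (V, E - {e}, u, v)"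
| vdel: "x \<in> V \<Longrightarrow> x \<notin> set u \<Longrightarrow> x \<notin> set v \<Longrightarrow>
         bminor_step (V, E, u, v) (V - {x}, {e \<in> E. x \<notin> e}, u, v)"
| contr: "{a, b} \<in> E \<Longrightarrow> a \<noteq> b \<Longrightarrow>
         bminor_step (V, E, u, v) (bg_map (\<lambda>x. if x = b then a else x) (V, E - {{a, b}}, u, v))"

definition bminor :: "bgraph \<Rightarrow> bgraph \<Rightarrow> bool" where
  "bminor F G = bminor_step\<^sup>*\<^sup>* F G"

definition QP :: "nat \<Rightarrow> bgraph set" where
  "QP k = {G. \<exists>H. bminor (bgC k) H \<and> bg_iso H G}"

definition QS :: "nat \<Rightarrow> bgraph set" where
  "QS k = {G. \<exists>H. bminor (bgM k) H \<and> bg_iso H G}"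

definition Q :: "nat \<Rightarrow> bgraph set" where
  "Q k = QP k \<union> QS k"

inductive_set P :: "nat \<Rightarrow> bgraph set" for k :: nat where
  base: "G \<in> Q k \<Longrightarrow> G \<in> P k"
| series: "F \<in> P k \<Longrightarrow> F' \<in> P k \<Longrightarrow> bg_series F F' \<in> P k"
| parallel: "F \<in> P k \<Longrightarrow> H \<in> QP k \<Longrightarrow> bg_parallel F H \<in> P k"
| perm: "F \<in> P k \<Longrightarrow> \<sigma> \<in> rot_group k \<Longrightarrow> bg_perm \<sigma> F \<in> P k"
| iso: "F \<in> P k \<Longrightarrow> bg_iso F G \<Longrightarrow> G \<in> P k"

end

(* Induction along the construction of P_k shows that every minor of a member of P_k is in P_k.
   The classes Q^P_k and Q^S_k are minor-closed by definition, and minor operations commute with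
   isomorphisms and with rotations of the labels. Both compositions are quotients of a disjoint
   sum, so deleting or contracting an edge of a composition, or deleting an unlabelled vertex that
   is not glued, is the composition of minors of the factors. In a parallel composition with a
   member of Q^P_k every vertex of the second factor is labelled, so these are all the cases. In a
   series composition A . B, an unlabelled vertex x may come from out-labels of A glued to
   in-labels of B. Some edge {p, p'} of the cycle C_k joins an out-label position p' of A mapped
   to x with a position p mapped elsewhere. Deleting x amounts to removing the edges at x and
   merging x into the image of p, and that merge is a parallel composition of A with the
   contraction of C_k at {p, p'}, a member of Q^P_k. *)

theory Submission
  imports Defs
begin

declare Suc_double_not_eq_double [simp] double_not_eq_Suc_double [simp]

text \<open>Images under \<open>redirect b a\<close> below are kept folded instead of being split into cases.\<close>
declare if_image_distrib [simp del]

section \<open>Quotient maps\<close>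

abbreviation redirect :: "nat \<Rightarrow> nat \<Rightarrow> nat \<Rightarrow> nat" where
  "redirect b a \<equiv> (\<lambda>x. if x = b then a else x)"

lemma rtrancl_symcl_eq_equivclp: "(x, y) \<in> (R \<union> R\<inverse>)\<^sup>* \<longleftrightarrow> equivclp (in_rel R) x y"
proof -
  have "symclp (in_rel R) = (\<lambda>a b. (a, b) \<in> R \<union> R\<inverse>)"
    by (auto simp: symclp_pointfree fun_eq_iff)
  then show ?thesis by (simp add: equivclp_def rtrancl_def)
qed

lemma quot_map_equivclp: "equivclp (in_rel R) x (quot_map R x)"
  unfolding quot_map_def rtrancl_symcl_eq_equivclp[symmetric]
  by (rule LeastI[of _ x]) simp

lemma quot_map_eq_iff: "quot_map R x = quot_map R y \<longleftrightarrow> equivclp (in_rel R) x y"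
proof
  assume "quot_map R x = quot_map R y"
  then show "equivclp (in_rel R) x y"
    using quot_map_equivclp[of R x] quot_map_equivclp[of R y] by (metis equivclp_sym equivclp_trans)
next
  assume "equivclp (in_rel R) x y"
  then have "equivclp (in_rel R) x z \<longleftrightarrow> equivclp (in_rel R) y z" for z
    by (meson equivclp_sym equivclp_trans)
  then show "quot_map R x = quot_map R y"
    unfolding quot_map_def rtrancl_symcl_eq_equivclp by simp
qed

lemma quot_map_eqI: "(x, y) \<in> R \<Longrightarrow> quot_map R x = quot_map R y"
  by (auto simp: quot_map_eq_iff)

lemma equivclp_invariant:
  assumes "equivclp (in_rel R) x y" "\<And>a b. (a, b) \<in> R \<Longrightarrow> f a = f b"
  shows "f x = f y"
  using assms(1)
proof (induction rule: equivclp_induct)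
  case (step y z)
  from step.hyps(2) consider "(y, z) \<in> R" | "(z, y) \<in> R" by (simp only: in_rel_def) blast
  then have "f y = f z" by cases (simp_all add: assms(2))
  with step.IH show ?case by (rule trans)
qed simp

lemma equivclp_subrel:
  assumes "equivclp (in_rel R) x y" "\<And>a b. (a, b) \<in> R \<Longrightarrow> equivclp (in_rel S) a b"
  shows "equivclp (in_rel S) x y"
  using assms(1)
proof (induction rule: equivclp_induct)
  case (step y z)
  from step.hyps(2) consider "(y, z) \<in> R" | "(z, y) \<in> R" by (simp only: in_rel_def) blast
  then have "equivclp (in_rel S) y z" by cases (simp_all add: assms(2) equivclp_sym)
  with step.IH show ?case by (rule equivclp_trans)
qed simp

lemma equivclp_isolated:
  assumes "equivclp (in_rel R) x y" "x \<notin> Domain R" "x \<notin> Range R"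
  shows "y = x"
  using equivclp_invariant[OF assms(1), where f = "\<lambda>z. z = x"] assms(2,3) by auto

lemma quot_map_redirect_eq_iff:
  "quot_map (map_prod (redirect b a) (redirect b a) ` R) (redirect b a x)
     = quot_map (map_prod (redirect b a) (redirect b a) ` R) (redirect b a y)
   \<longleftrightarrow> equivclp (in_rel (insert (a, b) R)) x y"
proof -
  let ?r = "redirect b a" and ?E = "equivclp (in_rel (insert (a, b) R))"
  let ?R = "map_prod ?r ?r ` R"
  have redirect: "?E z (?r z)" for z
  proof (cases "z = b")
    case True
    then show ?thesis by (simp add: converse_r_into_equivclp)
  qed simp
  show ?thesis
  proof
    assume "quot_map ?R (?r x) = quot_map ?R (?r y)"
    then have "?E (?r x) (?r y)"
      unfolding quot_map_eq_iff
    proof (rule equivclp_subrel)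
      fix c d assume "(c, d) \<in> ?R"
      then obtain c' d' where "(c', d') \<in> R" "c = ?r c'" "d = ?r d'" by auto
      moreover from this(1) have "?E c' d'" by (intro r_into_equivclp) simp
      ultimately show "?E c d" using redirect[of c'] redirect[of d'] by (meson equivclp_sym equivclp_trans)
    qed
    then show "?E x y" using redirect[of x] redirect[of y] by (meson equivclp_sym equivclp_trans)
  next
    assume "?E x y"
    then show "quot_map ?R (?r x) = quot_map ?R (?r y)"
    proof (rule equivclp_invariant[where f = "\<lambda>z. quot_map ?R (?r z)"])
      fix c d assume "(c, d) \<in> insert (a, b) R"
      then show "quot_map ?R (?r c) = quot_map ?R (?r d)"
      proof
        assume "(c, d) \<in> R"
        then have "(?r c, ?r d) \<in> ?R" by (rule rev_image_eqI) simp
        then show ?thesis by (rule quot_map_eqI)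
      qed simp
    qed
  qed
qed

lemma redirect_quot_map_eq_iff:
  "redirect (quot_map R b) (quot_map R a) (quot_map R x) = redirect (quot_map R b) (quot_map R a) (quot_map R y)
   \<longleftrightarrow> equivclp (in_rel (insert (a, b) R)) x y"
proof -
  let ?E = "equivclp (in_rel (insert (a, b) R))" and ?q = "quot_map R"
  have ab: "?E a b" by (intro r_into_equivclp) simp
  have E_q: "?E c d" if "?q c = ?q d" for c d
    using that unfolding quot_map_eq_iff by (rule equivclp_subrel) (intro r_into_equivclp, simp)
  show ?thesis
  proof
    assume "redirect (?q b) (?q a) (?q x) = redirect (?q b) (?q a) (?q y)"
    then consider "?q x = ?q y" | "?q x = ?q b" "?q y = ?q a" | "?q x = ?q a" "?q y = ?q b"
      by (simp split: if_splits)
    then show "?E x y"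
      by cases (use E_q ab in \<open>meson equivclp_sym equivclp_trans\<close>)+
  next
    assume "?E x y"
    then show "redirect (?q b) (?q a) (?q x) = redirect (?q b) (?q a) (?q y)"
      by (rule equivclp_invariant) (auto dest: quot_map_eqI[of _ _ R])
  qed
qed

section \<open>Well-formed bilabelled graphs, relabelling and isomorphism\<close>

fun wf_bgraph :: "bgraph \<Rightarrow> bool" where
  "wf_bgraph (V, E, u, v) \<longleftrightarrow> finite V \<and> (\<forall>e\<in>E. e \<subseteq> V \<and> (\<exists>x y. e = {x, y})) \<and> set u \<subseteq> V \<and> set v \<subseteq> V"

fun bilabelled :: "nat \<Rightarrow> bgraph \<Rightarrow> bool" where
  "bilabelled k (V, E, u, v) \<longleftrightarrow> length u = k \<and> length v = k"

fun all_labelled :: "bgraph \<Rightarrow> bool" where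
  "all_labelled (V, E, u, v) \<longleftrightarrow> V \<subseteq> set u \<union> set v"

fun bg_word :: "bgraph \<Rightarrow> nat list" where
  "bg_word (V, E, u, v) = u @ v"

fun bg_restrict_edges :: "(nat set \<Rightarrow> bool) \<Rightarrow> bgraph \<Rightarrow> bgraph" where
  "bg_restrict_edges p (V, E, u, v) = (V, {e \<in> E. p e}, u, v)"

fun bg_delete_vertex :: "nat \<Rightarrow> bgraph \<Rightarrow> bgraph" where
  "bg_delete_vertex x (V, E, u, v) = (V - {x}, {e \<in> E. x \<notin> e}, u, v)"

lemma bg_map_simps [simp]: "bg_map f (V, E, u, v) = (f ` V, (\<lambda>e. f ` e) ` E, map f u, map f v)"
  by (simp add: bg_map_def)

lemma fst_bg_map [simp]: "fst (bg_map f F) = f ` fst F"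
  by (cases F) simp

lemma bg_word_bg_map [simp]: "bg_word (bg_map f F) = map f (bg_word F)"
  by (cases F) simp

lemma bg_map_comp: "bg_map g (bg_map f F) = bg_map (g \<circ> f) F"
  by (cases F) (auto simp: image_comp)

lemma bg_map_ident [simp]: "bg_map (\<lambda>x. x) F = F"
  by (cases F) simp

lemma bg_map_cong:
  assumes "wf_bgraph F" "\<And>x. x \<in> fst F \<Longrightarrow> f x = g x"
  shows "bg_map f F = bg_map g F"
proof -
  obtain V E u v where F: "F = (V, E, u, v)" by (cases F) auto
  have "f ` e = g ` e" if "e \<in> E" for e
    using that assms F by (intro image_cong) auto
  then have "(\<lambda>e. f ` e) ` E = (\<lambda>e. g ` e) ` E" by (rule image_cong[OF refl])
  moreover have "map f u = map g u" "map f v = map g v" "f ` V = g ` V"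
    using assms F by auto
  ultimately show ?thesis using F by simp
qed

lemma wf_bgraph_bg_map: "wf_bgraph F \<Longrightarrow> wf_bgraph (bg_map f F)"
  by (cases F) (fastforce simp: image_mono)

lemma bilabelled_bg_map: "bilabelled k (bg_map f F) \<longleftrightarrow> bilabelled k F"
  by (cases F) simp

lemma all_labelled_bg_map: "all_labelled F \<Longrightarrow> all_labelled (bg_map f F)"
  by (cases F) (auto simp: image_subset_iff)

lemma bg_iso_iff: "bg_iso F G \<longleftrightarrow> (\<exists>f. inj_on f (fst F) \<and> G = bg_map f F)"
  unfolding bg_iso_def bij_betw_def by (cases F) auto

lemma bg_iso_bg_map: "inj_on f (fst F) \<Longrightarrow> bg_iso F (bg_map f F)"
  unfolding bg_iso_iff by blast

lemma bg_iso_refl: "bg_iso F F"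
  using bg_iso_bg_map[of "\<lambda>x. x"] by simp

lemma bg_iso_trans:
  assumes "bg_iso F G" "bg_iso G H"
  shows "bg_iso F H"
proof -
  obtain f where f: "inj_on f (fst F)" "G = bg_map f F" using assms(1) by (auto simp: bg_iso_iff)
  obtain g where g: "inj_on g (fst G)" "H = bg_map g G" using assms(2) by (auto simp: bg_iso_iff)
  have "fst G = f ` fst F" using f(2) by (cases F) simp
  then have "inj_on (g \<circ> f) (fst F)" using f(1) g(1) by (simp add: comp_inj_on)
  then show ?thesis unfolding bg_iso_iff using f(2) g(2) bg_map_comp by metis
qed

lemma bg_iso_same_kernel:
  assumes "wf_bgraph F" and kernel: "\<And>x y. x \<in> fst F \<Longrightarrow> y \<in> fst F \<Longrightarrow> f x = f y \<longleftrightarrow> g x = g y"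
  shows "bg_iso (bg_map f F) (bg_map g F)"
proof -
  define h where "h = (\<lambda>z. g (inv_into (fst F) f z))"
  have hf: "h (f x) = g x" if "x \<in> fst F" for x
  proof -
    have "inv_into (fst F) f (f x) \<in> fst F" "f (inv_into (fst F) f (f x)) = f x"
      using that by (auto intro: inv_into_into f_inv_into_f)
    then show ?thesis unfolding h_def using kernel that by blast
  qed
  have "inj_on h (f ` fst F)"
    by (rule inj_onI) (auto simp: hf kernel)
  moreover have "bg_map h (bg_map f F) = bg_map g F"
    unfolding bg_map_comp by (rule bg_map_cong[OF assms(1)]) (simp add: hf)
  moreover have "fst (bg_map f F) = f ` fst F" by (cases F) simp
  ultimately show ?thesis using bg_iso_bg_map[of h "bg_map f F"] by metis
qed

section \<open>Minors\<close>

fun bg_edges :: "bgraph \<Rightarrow> nat set set" where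
  "bg_edges (V, E, u, v) = E"

fun bg_delete_edge :: "nat set \<Rightarrow> bgraph \<Rightarrow> bgraph" where
  "bg_delete_edge e (V, E, u, v) = (V, E - {e}, u, v)"

definition bg_contract :: "nat \<Rightarrow> nat \<Rightarrow> bgraph \<Rightarrow> bgraph" where
  "bg_contract a b F = bg_map (redirect b a) (bg_delete_edge {a, b} F)"

lemma bminor_step_delete_edge: "e \<in> bg_edges F \<Longrightarrow> bminor_step F (bg_delete_edge e F)"
  by (cases F) (auto intro: edel)

lemma bminor_step_delete_vertex:
  "x \<in> fst F \<Longrightarrow> x \<notin> set (bg_word F) \<Longrightarrow> bminor_step F (bg_delete_vertex x F)"
  by (cases F) (auto intro: vdel)

lemma bminor_step_contract: "{a, b} \<in> bg_edges F \<Longrightarrow> a \<noteq> b \<Longrightarrow> bminor_step F (bg_contract a b F)"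
  unfolding bg_contract_def by (cases F) (auto simp del: bg_map_simps intro: contr)

lemma bminor_stepE:
  assumes "bminor_step F G"
  obtains (delete_edge) e where "e \<in> bg_edges F" "G = bg_delete_edge e F"
  | (delete_vertex) x where "x \<in> fst F" "x \<notin> set (bg_word F)" "G = bg_delete_vertex x F"
  | (contract) a b where "{a, b} \<in> bg_edges F" "a \<noteq> b" "G = bg_contract a b F"
  using assms by cases (auto simp: bg_contract_def)

lemma bminor_refl: "bminor F F"
  by (simp add: bminor_def)

lemma bminor_trans: "bminor F G \<Longrightarrow> bminor G H \<Longrightarrow> bminor F H"
  unfolding bminor_def by (rule rtranclp_trans)

lemma bminor_stepI: "bminor_step F G \<Longrightarrow> bminor F G"
  unfolding bminor_def by (rule r_into_rtranclp)

lemma bminor_invariant: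
  assumes "bminor F G" "I F" "\<And>F G. bminor_step F G \<Longrightarrow> I F \<Longrightarrow> I G"
  shows "I G"
  using assms(1,2) unfolding bminor_def
  by (induction rule: rtranclp_induct) (use assms(3) in blast)+

lemma wf_bgraph_delete_edge: "wf_bgraph F \<Longrightarrow> wf_bgraph (bg_delete_edge e F)"
  by (cases F) simp

lemma wf_bgraph_bminor_step:
  assumes "bminor_step F G" "wf_bgraph F"
  shows "wf_bgraph G"
  using assms(1)
proof (cases rule: bminor_stepE)
  case (delete_vertex x)
  obtain V E u v where "F = (V, E, u, v)" by (cases F) auto
  with delete_vertex assms(2) show ?thesis by (simp add: subset_Diff_insert)
qed (use assms(2) in \<open>simp_all add: bg_contract_def wf_bgraph_bg_map wf_bgraph_delete_edge\<close>)

lemma bilabelled_bminor_step: "bminor_step F G \<Longrightarrow> bilabelled k F \<Longrightarrow> bilabelled k G"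
  by (elim bminor_stepE) (cases F; simp add: bg_contract_def)+

lemma all_labelled_bminor_step: "bminor_step F G \<Longrightarrow> all_labelled F \<Longrightarrow> all_labelled G"
  by (elim bminor_stepE) (cases F; auto simp: bg_contract_def all_labelled_bg_map)+

lemma bminor_step_vertices: "bminor_step F G \<Longrightarrow> wf_bgraph F \<Longrightarrow> fst G \<subseteq> fst F"
  by (elim bminor_stepE) (cases F; auto simp: bg_contract_def)+

lemma bminor_delete_edges: "finite D \<Longrightarrow> bminor (V, E, u, v) (V, E - D, u, v)"
proof (induction D rule: finite_induct)
  case (insert e D)
  show ?case
  proof (cases "e \<in> E - D")
    case True
    have "bminor_step (V, E - D, u, v) (bg_delete_edge e (V, E - D, u, v))"
      using True by (intro bminor_step_delete_edge) simp
    moreover have "bg_delete_edge e (V, E - D, u, v) = (V, E - insert e D, u, v)" by auto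
    ultimately have "bminor_step (V, E - D, u, v) (V, E - insert e D, u, v)" by simp
    then show ?thesis using insert.IH by (meson bminor_trans bminor_stepI)
  next
    case False
    then have "E - insert e D = E - D" by blast
    then show ?thesis using insert.IH by simp
  qed
qed (simp add: bminor_refl)

lemma bminor_restrict_edges:
  assumes "wf_bgraph F"
  shows "bminor F (bg_restrict_edges p F)"
proof -
  obtain V E u v where F: "F = (V, E, u, v)" by (cases F) auto
  have "finite E" using assms F by (auto intro: finite_subset[of E "Pow V"])
  then have "bminor F (V, E - {e \<in> E. \<not> p e}, u, v)" unfolding F by (intro bminor_delete_edges) simp
  moreover have "E - {e \<in> E. \<not> p e} = {e \<in> E. p e}" by blast
  ultimately show ?thesis using F by simp
qed

lemma bminor_contract_restricted:
  assumes "wf_bgraph F" "{a, b} \<in> bg_edges F" "a \<noteq> b" "\<not> p {a, b}"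
  shows "bminor F (bg_map (redirect b a) (bg_restrict_edges p F))"
proof -
  let ?F' = "bg_restrict_edges (\<lambda>e. p e \<or> e = {a, b}) F"
  have "bminor_step ?F' (bg_contract a b ?F')"
    using assms(2,3) by (intro bminor_step_contract) (cases F, simp)
  with bminor_restrict_edges[OF assms(1)] have "bminor F (bg_contract a b ?F')"
    by (blast intro: bminor_trans bminor_stepI)
  moreover have "bg_contract a b ?F' = bg_map (redirect b a) (bg_restrict_edges p F)"
    using assms(4) by (cases F) (auto simp: bg_contract_def intro!: arg_cong[where f = "\<lambda>E. _ ` E"])
  ultimately show ?thesis by simp
qed

lemma bg_delete_edge_bg_map:
  "bg_delete_edge e (bg_map h F) = bg_map h (bg_restrict_edges (\<lambda>e'. h ` e' \<noteq> e) F)"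
  by (cases F) auto

lemma bg_contract_bg_map:
  "bg_contract a b (bg_map h F) = bg_map (redirect b a \<circ> h) (bg_restrict_edges (\<lambda>e'. h ` e' \<noteq> {a, b}) F)"
  by (simp add: bg_contract_def bg_delete_edge_bg_map bg_map_comp)

lemma bg_delete_vertex_bg_map:
  assumes "wf_bgraph F" "y \<in> fst F" "\<And>z. z \<in> fst F \<Longrightarrow> h z = h y \<Longrightarrow> z = y"
  shows "bg_delete_vertex (h y) (bg_map h F) = bg_map h (bg_delete_vertex y F)"
proof -
  obtain V E u v where F: "F = (V, E, u, v)" by (cases F) auto
  have "h y \<in> h ` e \<longleftrightarrow> y \<in> e" if "e \<in> E" for e
  proof
    assume "h y \<in> h ` e"
    then obtain z where "z \<in> e" "h z = h y" by auto
    moreover have "e \<subseteq> V" using that assms(1) F by simp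
    ultimately show "y \<in> e" using assms(3) F by auto
  qed simp
  then have "{e \<in> (\<lambda>e. h ` e) ` E. h y \<notin> e} = (\<lambda>e. h ` e) ` {e \<in> E. y \<notin> e}" by auto
  moreover have "h ` V - {h y} = h ` (V - {y})" using assms(3) F by auto
  ultimately show ?thesis using F by simp
qed

text \<open>Deleting an unlabelled vertex \<open>x\<close> amounts to removing its edges and then merging it
  into any other vertex \<open>z\<close>.\<close>

lemma bg_delete_vertex_bg_map_merge:
  assumes "x \<notin> set (bg_word (bg_map h F))" "z \<in> fst (bg_map h F)" "z \<noteq> x"
  shows "bg_delete_vertex x (bg_map h F) = bg_map (redirect x z \<circ> h) (bg_restrict_edges (\<lambda>e. x \<notin> h ` e) F)"
proof -
  obtain V E u v where F: "F = (V, E, u, v)" by (cases F) auto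
  have "(redirect x z \<circ> h) ` V \<subseteq> h ` V - {x}"
    using assms(2,3) F by (auto split: if_splits)
  moreover have "h ` V - {x} \<subseteq> (redirect x z \<circ> h) ` V"
  proof
    fix y assume "y \<in> h ` V - {x}"
    then obtain w where "w \<in> V" "y = h w" "h w \<noteq> x" by auto
    then show "y \<in> (redirect x z \<circ> h) ` V" by (auto intro: rev_image_eqI)
  qed
  moreover have "(redirect x z \<circ> h) ` e = h ` e" if "x \<notin> h ` e" for e
    using that by (auto intro!: image_cong)
  then have "(\<lambda>e. (redirect x z \<circ> h) ` e) ` {e \<in> E. x \<notin> h ` e} = {e \<in> (\<lambda>e. h ` e) ` E. x \<notin> e}"
    by auto
  moreover have "map (redirect x z \<circ> h) u = map h u" "map (redirect x z \<circ> h) v = map h v"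
    using assms(1) F by (auto intro!: map_cong)
  ultimately show ?thesis using F by simp
qed

lemma doubleton_image_eq:
  assumes "h ` e = {a, b}" "e = {c, d}"
  obtains a' b' where "e = {a', b'}" "h a' = a" "h b' = b"
proof -
  have "(a = h c \<and> b = h d) \<or> (a = h d \<and> b = h c)" using assms by (auto simp: doubleton_eq_iff)
  then show thesis using that assms(2) by (metis insert_commute)
qed

lemma bg_edges_bg_map [simp]: "bg_edges (bg_map f F) = (\<lambda>e. f ` e) ` bg_edges F"
  by (cases F) simp

lemma wf_bgraph_edgeD: "wf_bgraph F \<Longrightarrow> e \<in> bg_edges F \<Longrightarrow> e \<subseteq> fst F \<and> (\<exists>x y. e = {x, y})"
  by (cases F) simp

lemma bg_delete_edge_bg_map_inj:
  assumes "wf_bgraph F" "inj_on f (fst F)" "e \<in> bg_edges F"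
  shows "bg_delete_edge (f ` e) (bg_map f F) = bg_map f (bg_delete_edge e F)"
proof -
  have "f ` e' = f ` e \<longleftrightarrow> e' = e" if "e' \<in> bg_edges F" for e'
    using inj_on_image_eq_iff[OF assms(2)] wf_bgraph_edgeD[OF assms(1) that] wf_bgraph_edgeD[OF assms(1,3)]
    by simp
  then have "bg_restrict_edges (\<lambda>e'. f ` e' \<noteq> f ` e) F = bg_delete_edge e F" by (cases F) auto
  then show ?thesis by (simp add: bg_delete_edge_bg_map)
qed

lemma bg_contract_bg_map_inj:
  assumes "wf_bgraph F" "inj_on f (fst F)" "{a, b} \<in> bg_edges F"
  shows "bg_contract (f a) (f b) (bg_map f F) = bg_map f (bg_contract a b F)"
proof -
  have ab: "a \<in> fst F" "b \<in> fst F" using wf_bgraph_edgeD[OF assms(1,3)] by auto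
  have "bg_contract (f a) (f b) (bg_map f F) = bg_map (redirect (f b) (f a) \<circ> f) (bg_delete_edge {a, b} F)"
    using bg_delete_edge_bg_map_inj[OF assms] by (simp add: bg_contract_def bg_map_comp)
  also have "\<dots> = bg_map (f \<circ> redirect b a) (bg_delete_edge {a, b} F)"
  proof (rule bg_map_cong)
    show "wf_bgraph (bg_delete_edge {a, b} F)" using assms(1) by (rule wf_bgraph_delete_edge)
    fix y assume "y \<in> fst (bg_delete_edge {a, b} F)"
    then have "y \<in> fst F" by (cases F) simp
    then have "f y = f b \<longleftrightarrow> y = b" using inj_on_eq_iff[OF assms(2) _ ab(2)] by simp
    then show "(redirect (f b) (f a) \<circ> f) y = (f \<circ> redirect b a) y" by simp
  qed
  also have "\<dots> = bg_map f (bg_contract a b F)" by (simp add: bg_contract_def bg_map_comp)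
  finally show ?thesis .
qed

lemma bminor_step_bg_map_inj:
  assumes "wf_bgraph F" "inj_on f (fst F)" "bminor_step (bg_map f F) G"
  obtains F' where "bminor_step F F'" "G = bg_map f F'"
  using assms(3)
proof (cases rule: bminor_stepE)
  case (delete_edge e)
  then obtain e0 where e0: "e0 \<in> bg_edges F" "e = f ` e0" by auto
  then have "G = bg_map f (bg_delete_edge e0 F)"
    using delete_edge(2) bg_delete_edge_bg_map_inj[OF assms(1,2) e0(1)] by simp
  with bminor_step_delete_edge[OF e0(1)] show thesis by (rule that)
next
  case (delete_vertex x)
  then obtain x0 where x0: "x0 \<in> fst F" "x = f x0" "x0 \<notin> set (bg_word F)" by auto
  have "bg_delete_vertex (f x0) (bg_map f F) = bg_map f (bg_delete_vertex x0 F)"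
    by (rule bg_delete_vertex_bg_map) (use assms(1,2) x0 in \<open>auto simp: inj_on_eq_iff\<close>)
  then have "G = bg_map f (bg_delete_vertex x0 F)" using delete_vertex(3) x0(2) by simp
  with bminor_step_delete_vertex[OF x0(1,3)] show thesis by (rule that)
next
  case (contract a b)
  then obtain e0 where e0: "e0 \<in> bg_edges F" "f ` e0 = {a, b}" by auto
  moreover obtain c d where "e0 = {c, d}" using wf_bgraph_edgeD[OF assms(1) e0(1)] by blast
  ultimately obtain a0 b0 where ab0: "e0 = {a0, b0}" "f a0 = a" "f b0 = b" by (elim doubleton_image_eq)
  have "G = bg_contract (f a0) (f b0) (bg_map f F)" using contract(3) ab0 by simp
  also have "\<dots> = bg_map f (bg_contract a0 b0 F)"
    using assms(1,2) e0(1) ab0(1) by (intro bg_contract_bg_map_inj) simp_all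
  finally have "G = bg_map f (bg_contract a0 b0 F)" .
  moreover have "bminor_step F (bg_contract a0 b0 F)"
    using contract(2) e0(1) ab0 by (intro bminor_step_contract) auto
  ultimately show thesis using that by blast
qed

lemma bminor_wf_bgraph_vertices:
  assumes "bminor F G" "wf_bgraph F"
  shows "wf_bgraph G \<and> fst G \<subseteq> fst F"
proof (rule bminor_invariant[OF assms(1), where I = "\<lambda>G. wf_bgraph G \<and> fst G \<subseteq> fst F"])
  fix G H assume "bminor_step G H" "wf_bgraph G \<and> fst G \<subseteq> fst F"
  then show "wf_bgraph H \<and> fst H \<subseteq> fst F"
    using wf_bgraph_bminor_step bminor_step_vertices by (meson order_trans)
qed (simp add: assms(2))

lemma bminor_bg_map_inj:
  assumes "wf_bgraph F" "inj_on f (fst F)" "bminor (bg_map f F) G"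
  obtains F' where "bminor F F'" "G = bg_map f F'"
proof -
  have "\<exists>F'. bminor F F' \<and> G = bg_map f F'"
    using assms(3) unfolding bminor_def
  proof (induction rule: rtranclp_induct)
    case base
    show ?case using bminor_refl by blast
  next
    case (step G G')
    then obtain F' where F': "bminor F F'" "G = bg_map f F'" by (auto simp: bminor_def)
    have "wf_bgraph F'" "inj_on f (fst F')"
      using bminor_wf_bgraph_vertices[OF F'(1) assms(1)] assms(2) inj_on_subset by blast+
    moreover have "bminor_step (bg_map f F') G'" using step.hyps(2) F'(2) by simp
    ultimately obtain F'' where F'': "bminor_step F' F''" "G' = bg_map f F''"
      by (rule bminor_step_bg_map_inj)
    have "bminor F F''" using F'(1) bminor_stepI[OF F''(1)] by (rule bminor_trans)
    then show ?case using F''(2) unfolding bminor_def by blast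
  qed
  then show thesis using that by blast
qed

lemma bminor_step_bg_iso:
  assumes "wf_bgraph F" "bg_iso F G" "bminor_step G G'"
  obtains F' where "bminor_step F F'" "bg_iso F' G'"
proof -
  obtain f where f: "inj_on f (fst F)" "G = bg_map f F" using assms(2) by (auto simp: bg_iso_iff)
  obtain F' where F': "bminor_step F F'" "G' = bg_map f F'"
    using assms(1) f(1) assms(3)[unfolded f(2)] by (rule bminor_step_bg_map_inj)
  have "inj_on f (fst F')" using bminor_step_vertices[OF F'(1) assms(1)] f(1) inj_on_subset by blast
  then have "bg_iso F' G'" unfolding F'(2) by (rule bg_iso_bg_map)
  with F'(1) show thesis by (rule that)
qed

lemma bminor_bg_iso:
  assumes "wf_bgraph F" "bg_iso F G" "bminor G G'"
  obtains F' where "bminor F F'" "bg_iso F' G'"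
proof -
  obtain f where f: "inj_on f (fst F)" "G = bg_map f F" using assms(2) by (auto simp: bg_iso_iff)
  obtain F' where F': "bminor F F'" "G' = bg_map f F'"
    using assms(1) f(1) assms(3)[unfolded f(2)] by (rule bminor_bg_map_inj)
  have "inj_on f (fst F')"
    using bminor_wf_bgraph_vertices[OF F'(1) assms(1)] f(1) inj_on_subset by blast
  then have "bg_iso F' G'" unfolding F'(2) by (rule bg_iso_bg_map)
  with F'(1) show thesis by (rule that)
qed

section \<open>Series and parallel composition as quotients of a disjoint sum\<close>

fun bg_in :: "bgraph \<Rightarrow> nat list" where
  "bg_in (V, E, u, v) = u"

fun bg_out :: "bgraph \<Rightarrow> nat list" where
  "bg_out (V, E, u, v) = v"

lemma bg_word_eq: "bg_word F = bg_in F @ bg_out F"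
  by (cases F) simp

lemma bg_labels_simps [simp]:
  "bg_in (bg_restrict_edges p F) = bg_in F" "bg_out (bg_restrict_edges p F) = bg_out F"
  "bg_word (bg_restrict_edges p F) = bg_word F"
  "bg_in (bg_delete_vertex x F) = bg_in F" "bg_out (bg_delete_vertex x F) = bg_out F"
  "bg_word (bg_delete_vertex x F) = bg_word F"
  "bg_in (bg_map f F) = map f (bg_in F)" "bg_out (bg_map f F) = map f (bg_out F)"
  by (cases F; simp)+

definition bg_sum :: "bgraph \<Rightarrow> bgraph \<Rightarrow> nat list \<Rightarrow> nat list \<Rightarrow> bgraph" where
  "bg_sum F F' u v = (case F of (V, E, _) \<Rightarrow> case F' of (V', E', _) \<Rightarrow>
     ((\<lambda>x. 2 * x) ` V \<union> (\<lambda>x. 2 * x + 1) ` V',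
      (\<lambda>e. (\<lambda>x. 2 * x) ` e) ` E \<union> (\<lambda>e. (\<lambda>x. 2 * x + 1) ` e) ` E', u, v))"

lemma bg_sum_simps [simp]:
  "bg_sum (V, E, l) (V', E', l') u v =
     ((\<lambda>x. 2 * x) ` V \<union> (\<lambda>x. 2 * x + 1) ` V',
      (\<lambda>e. (\<lambda>x. 2 * x) ` e) ` E \<union> (\<lambda>e. (\<lambda>x. 2 * x + 1) ` e) ` E', u, v)"
  by (simp add: bg_sum_def)

lemma bg_sum_components [simp]:
  "fst (bg_sum A B u v) = (\<lambda>x. 2 * x) ` fst A \<union> (\<lambda>x. 2 * x + 1) ` fst B"
  "bg_in (bg_sum A B u v) = u" "bg_out (bg_sum A B u v) = v"
  by (cases A, cases B, simp)+

lemma wf_bgraph_union: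
  assumes "wf_bgraph (V, E, u, v)" "wf_bgraph (V', E', u', v')" "set w \<union> set w' \<subseteq> V \<union> V'"
  shows "wf_bgraph (V \<union> V', E \<union> E', w, w')"
  using assms by auto

lemma wf_bgraph_bg_sum:
  assumes "wf_bgraph A" "wf_bgraph B"
    and "set u \<union> set v \<subseteq> (\<lambda>x. 2 * x) ` set (bg_word A) \<union> (\<lambda>x. 2 * x + 1) ` set (bg_word B)"
  shows "wf_bgraph (bg_sum A B u v)"
proof -
  obtain V E uA vA where A: "A = (V, E, uA, vA)" by (cases A) auto
  obtain V' E' uB vB where B: "B = (V', E', uB, vB)" by (cases B) auto
  have "wf_bgraph (bg_map (\<lambda>x. 2 * x) A)" using assms(1) by (rule wf_bgraph_bg_map)
  moreover have "wf_bgraph (bg_map (\<lambda>x. 2 * x + 1) B)" using assms(2) by (rule wf_bgraph_bg_map)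
  moreover have "set (bg_word A) \<subseteq> V" "set (bg_word B) \<subseteq> V'" using assms(1,2) A B by simp_all
  then have "set u \<union> set v \<subseteq> (\<lambda>x. 2 * x) ` V \<union> (\<lambda>x. 2 * x + 1) ` V'"
    using assms(3) by (meson Un_mono image_mono subset_trans)
  ultimately show ?thesis unfolding A B bg_sum_simps
    by (intro wf_bgraph_union) (simp_all only: bg_map_simps)
qed

lemma bg_sum_bg_map:
  assumes "\<And>x. g (2 * x) = 2 * s x" "\<And>x. g (2 * x + 1) = 2 * t x + 1"
  shows "bg_map g (bg_sum A B u v) = bg_sum (bg_map s A) (bg_map t B) (map g u) (map g v)"
proof -
  have "g \<circ> (\<lambda>x. 2 * x) = (\<lambda>x. 2 * x) \<circ> s" "g \<circ> (\<lambda>x. 2 * x + 1) = (\<lambda>x. 2 * x + 1) \<circ> t"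
    using assms by auto
  then show ?thesis by (cases A, cases B) (simp add: image_Un image_comp)
qed

lemma bg_sum_restrict_edges:
  "bg_sum (bg_restrict_edges (\<lambda>e. p ((\<lambda>x. 2 * x) ` e)) A) (bg_restrict_edges (\<lambda>e. p ((\<lambda>x. 2 * x + 1) ` e)) B) u v
     = bg_restrict_edges p (bg_sum A B u v)"
  by (cases A, cases B) auto

lemma bg_sum_delete_vertex:
  "bg_delete_vertex (2 * a) (bg_sum A B u v) = bg_sum (bg_delete_vertex a A) B u v"
  "bg_delete_vertex (2 * b + 1) (bg_sum A B u v) = bg_sum A (bg_delete_vertex b B) u v"
proof -
  obtain V E uA vA where A: "A = (V, E, uA, vA)" by (cases A) auto
  obtain V' E' uB vB where B: "B = (V', E', uB, vB)" by (cases B) auto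
  have inj: "inj (\<lambda>x::nat. 2 * x)" "inj (\<lambda>x::nat. 2 * x + 1)" by (auto intro: injI)
  have not_odd: "2 * a \<notin> (\<lambda>x. 2 * x + 1) ` X" and not_even: "2 * b + 1 \<notin> (\<lambda>x. 2 * x) ` X" for X
    by (auto; presburger)+
  have filter_image: "{e \<in> (\<lambda>e. f ` e) ` X. f x \<notin> e} = (\<lambda>e. f ` e) ` {e \<in> X. x \<notin> e}"
    if "inj f" for f X x
    using that by (auto simp: inj_image_mem_iff dest: injD)
  have filter_Un: "{e \<in> X \<union> Y. P e} = {e \<in> X. P e} \<union> {e \<in> Y. P e}" for X Y P by blast
  have "{e \<in> (\<lambda>e. (\<lambda>x. 2 * x + 1) ` e) ` E'. 2 * a \<notin> e} = (\<lambda>e. (\<lambda>x. 2 * x + 1) ` e) ` E'"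
    "(\<lambda>x. 2 * x + 1) ` V' - {2 * a} = (\<lambda>x. 2 * x + 1) ` V'"
    using not_odd by auto
  then show "bg_delete_vertex (2 * a) (bg_sum A B u v) = bg_sum (bg_delete_vertex a A) B u v"
    unfolding A B by (simp only: bg_sum_simps bg_delete_vertex.simps Un_Diff filter_Un
        filter_image[OF inj(1)] image_set_diff[OF inj(1)] image_insert image_empty)
  have "{e \<in> (\<lambda>e. (\<lambda>x. 2 * x) ` e) ` E. 2 * b + 1 \<notin> e} = (\<lambda>e. (\<lambda>x. 2 * x) ` e) ` E"
    "(\<lambda>x. 2 * x) ` V - {2 * b + 1} = (\<lambda>x. 2 * x) ` V"
    using not_even by auto
  then show "bg_delete_vertex (2 * b + 1) (bg_sum A B u v) = bg_sum A (bg_delete_vertex b B) u v"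
    unfolding A B by (simp only: bg_sum_simps bg_delete_vertex.simps Un_Diff filter_Un
        filter_image[OF inj(2)] image_set_diff[OF inj(2)] image_insert image_empty)
qed

text \<open>Series and parallel composition are quotients of the disjoint sum in which the glued pairs
  and the labels of the result depend only on the labels of the factors.\<close>

locale bg_composition =
  fixes comp :: "bgraph \<Rightarrow> bgraph \<Rightarrow> bgraph"
    and glue :: "bgraph \<Rightarrow> bgraph \<Rightarrow> (nat \<times> nat) set"
    and lin lout :: "bgraph \<Rightarrow> bgraph \<Rightarrow> nat list"
  assumes comp_eq: "comp A B = bg_map (quot_map (glue A B)) (bg_sum A B (lin A B) (lout A B))"
    and labels_only: "bg_in A' = bg_in A \<Longrightarrow> bg_out A' = bg_out A \<Longrightarrow> bg_in B' = bg_in B \<Longrightarrow>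
      bg_out B' = bg_out B \<Longrightarrow> glue A' B' = glue A B \<and> lin A' B' = lin A B \<and> lout A' B' = lout A B"
    and labels_from_factors:
      "set (lin A B) \<union> set (lout A B) \<subseteq> (\<lambda>x. 2 * x) ` set (bg_word A) \<union> (\<lambda>x. 2 * x + 1) ` set (bg_word B)"
    and bg_map_factors: "(\<And>x. g (2 * x) = 2 * s x) \<Longrightarrow> (\<And>x. g (2 * x + 1) = 2 * t x + 1) \<Longrightarrow>
      glue (bg_map s A) (bg_map t B) = map_prod g g ` glue A B \<and>
      lin (bg_map s A) (bg_map t B) = map g (lin A B) \<and> lout (bg_map s A) (bg_map t B) = map g (lout A B)"
begin

definition quot :: "bgraph \<Rightarrow> bgraph \<Rightarrow> nat \<Rightarrow> nat" where
  "quot A B = quot_map (glue A B)"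

definition dsum :: "bgraph \<Rightarrow> bgraph \<Rightarrow> bgraph" where
  "dsum A B = bg_sum A B (lin A B) (lout A B)"

lemma comp_eq_bg_map_dsum: "comp A B = bg_map (quot A B) (dsum A B)"
  by (simp add: comp_eq quot_def dsum_def)

lemma wf_bgraph_dsum: "wf_bgraph A \<Longrightarrow> wf_bgraph B \<Longrightarrow> wf_bgraph (dsum A B)"
  unfolding dsum_def by (rule wf_bgraph_bg_sum[OF _ _ labels_from_factors])

lemma wf_bgraph_comp: "wf_bgraph A \<Longrightarrow> wf_bgraph B \<Longrightarrow> wf_bgraph (comp A B)"
  by (simp add: comp_eq_bg_map_dsum wf_bgraph_bg_map wf_bgraph_dsum)

lemma quot_dsum_restrict_edges:
  fixes p :: "nat set \<Rightarrow> bool" and A B :: bgraph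
  defines "A' \<equiv> bg_restrict_edges (\<lambda>e. p ((\<lambda>x. 2 * x) ` e)) A"
    and "B' \<equiv> bg_restrict_edges (\<lambda>e. p ((\<lambda>x. 2 * x + 1) ` e)) B"
  shows "quot A' B' = quot A B" "dsum A' B' = bg_restrict_edges p (dsum A B)"
  using labels_only[of A' A B' B] bg_sum_restrict_edges[of p A B "lin A B" "lout A B"]
  unfolding A'_def B'_def quot_def dsum_def by simp_all

lemma quot_dsum_delete_vertex:
  "quot (bg_delete_vertex a A) B = quot A B" "dsum (bg_delete_vertex a A) B = bg_delete_vertex (2 * a) (dsum A B)"
  "quot A (bg_delete_vertex b B) = quot A B" "dsum A (bg_delete_vertex b B) = bg_delete_vertex (2 * b + 1) (dsum A B)"
  using labels_only[of "bg_delete_vertex a A" A B B] labels_only[of A A "bg_delete_vertex b B" B]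
  using bg_sum_delete_vertex[of a A B "lin A B" "lout A B"] bg_sum_delete_vertex[of b A B "lin A B" "lout A B"]
  unfolding quot_def dsum_def by simp_all

lemma comp_redirect_iso:
  assumes "wf_bgraph A" "wf_bgraph B"
    and "\<And>x. redirect b a (2 * x) = 2 * s x" "\<And>x. redirect b a (2 * x + 1) = 2 * t x + 1"
  shows "bg_iso (comp (bg_map s A) (bg_map t B))
    (bg_map (redirect (quot A B b) (quot A B a) \<circ> quot A B) (dsum A B))"
proof -
  let ?r = "redirect b a"
  have "comp (bg_map s A) (bg_map t B) = bg_map (quot_map (map_prod ?r ?r ` glue A B)) (bg_map ?r (dsum A B))"
    using bg_map_factors[OF assms(3,4)] bg_sum_bg_map[OF assms(3,4)] by (simp add: comp_eq dsum_def)
  also have "\<dots> = bg_map (quot_map (map_prod ?r ?r ` glue A B) \<circ> ?r) (dsum A B)"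
    by (rule bg_map_comp)
  moreover have "bg_iso (bg_map (quot_map (map_prod ?r ?r ` glue A B) \<circ> ?r) (dsum A B))
      (bg_map (redirect (quot A B b) (quot A B a) \<circ> quot A B) (dsum A B))"
    unfolding quot_def by (rule bg_iso_same_kernel[OF wf_bgraph_dsum[OF assms(1,2)]])
      (simp only: comp_apply quot_map_redirect_eq_iff redirect_quot_map_eq_iff)
  ultimately show ?thesis by simp
qed

lemma comp_redirect_left_iso:
  assumes "wf_bgraph A" "wf_bgraph B"
  shows "bg_iso (comp (bg_map (redirect b a) A) B)
    (bg_map (redirect (quot A B (2 * b)) (quot A B (2 * a)) \<circ> quot A B) (dsum A B))"
proof -
  have "redirect (2 * b) (2 * a) (2 * x + 1) = 2 * x + 1" for x by presburger
  then show ?thesis using comp_redirect_iso[OF assms, of "2 * b" "2 * a" "redirect b a" "\<lambda>x. x"] by simp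
qed

lemma comp_redirect_right_iso:
  assumes "wf_bgraph A" "wf_bgraph B"
  shows "bg_iso (comp A (bg_map (redirect b a) B))
    (bg_map (redirect (quot A B (2 * b + 1)) (quot A B (2 * a + 1)) \<circ> quot A B) (dsum A B))"
proof -
  have "redirect (2 * b + 1) (2 * a + 1) (2 * x) = 2 * x" for x by presburger
  moreover have "redirect (2 * b + 1) (2 * a + 1) (2 * x + 1) = 2 * redirect b a x + 1" for x by simp
  ultimately show ?thesis using comp_redirect_iso[OF assms, of "2 * b + 1" "2 * a + 1" "\<lambda>x. x" "redirect b a"]
    by simp
qed

end

context bg_composition
begin

lemma comp_delete_edge:
  assumes "wf_bgraph A" "wf_bgraph B"
  obtains A' B' where "bminor A A'" "bminor B B'" "comp A' B' = bg_delete_edge e (comp A B)"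
proof -
  let ?p = "\<lambda>e'. quot A B ` e' \<noteq> e"
  let ?A' = "bg_restrict_edges (\<lambda>e'. ?p ((\<lambda>x. 2 * x) ` e')) A"
  let ?B' = "bg_restrict_edges (\<lambda>e'. ?p ((\<lambda>x. 2 * x + 1) ` e')) B"
  have "bg_delete_edge e (comp A B) = bg_map (quot A B) (bg_restrict_edges ?p (dsum A B))"
    by (simp add: comp_eq_bg_map_dsum bg_delete_edge_bg_map)
  also have "\<dots> = comp ?A' ?B'"
    unfolding comp_eq_bg_map_dsum quot_dsum_restrict_edges[of ?p A B] ..
  finally have "comp ?A' ?B' = bg_delete_edge e (comp A B)" by (rule sym)
  with bminor_restrict_edges[OF assms(1)] bminor_restrict_edges[OF assms(2)] show thesis by (rule that)
qed

lemma comp_contract_left: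
  assumes "wf_bgraph A" "wf_bgraph B" "{a, b} \<in> bg_edges A" "quot A B (2 * a) \<noteq> quot A B (2 * b)"
  obtains A' B' where "bminor A A'" "bminor B B'"
    "bg_iso (comp A' B') (bg_contract (quot A B (2 * a)) (quot A B (2 * b)) (comp A B))"
proof -
  let ?q = "quot A B" and ?p = "\<lambda>e. quot A B ` e \<noteq> {quot A B (2 * a), quot A B (2 * b)}"
  let ?A1 = "bg_restrict_edges (\<lambda>e. ?p ((\<lambda>x. 2 * x) ` e)) A"
  let ?B1 = "bg_restrict_edges (\<lambda>e. ?p ((\<lambda>x. 2 * x + 1) ` e)) B"
  have wf1: "wf_bgraph ?A1" "wf_bgraph ?B1" using assms(1,2) by (cases A, cases B, auto)+
  have q1: "quot ?A1 ?B1 = ?q" by (rule quot_dsum_restrict_edges(1)[of ?p A B])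
  have "bg_iso (comp (bg_map (redirect b a) ?A1) ?B1)
      (bg_map (redirect (?q (2 * b)) (?q (2 * a)) \<circ> ?q) (dsum ?A1 ?B1))"
    using comp_redirect_left_iso[OF wf1, of b a] unfolding q1 .
  also have "\<dots> = bg_contract (?q (2 * a)) (?q (2 * b)) (comp A B)"
    unfolding comp_eq_bg_map_dsum bg_contract_bg_map quot_dsum_restrict_edges[of ?p A B] ..
  finally have "bg_iso (comp (bg_map (redirect b a) ?A1) ?B1) (bg_contract (?q (2 * a)) (?q (2 * b)) (comp A B))" .
  moreover have "bminor A (bg_map (redirect b a) ?A1)"
    using assms by (intro bminor_contract_restricted) auto
  ultimately show thesis using that bminor_restrict_edges[OF assms(2)] by blast
qed

lemma comp_contract_right:
  assumes "wf_bgraph A" "wf_bgraph B" "{a, b} \<in> bg_edges B" "quot A B (2 * a + 1) \<noteq> quot A B (2 * b + 1)"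
  obtains A' B' where "bminor A A'" "bminor B B'"
    "bg_iso (comp A' B') (bg_contract (quot A B (2 * a + 1)) (quot A B (2 * b + 1)) (comp A B))"
proof -
  let ?q = "quot A B" and ?p = "\<lambda>e. quot A B ` e \<noteq> {quot A B (2 * a + 1), quot A B (2 * b + 1)}"
  let ?A1 = "bg_restrict_edges (\<lambda>e. ?p ((\<lambda>x. 2 * x) ` e)) A"
  let ?B1 = "bg_restrict_edges (\<lambda>e. ?p ((\<lambda>x. 2 * x + 1) ` e)) B"
  have wf1: "wf_bgraph ?A1" "wf_bgraph ?B1" using assms(1,2) by (cases A, cases B, auto)+
  have q1: "quot ?A1 ?B1 = ?q" by (rule quot_dsum_restrict_edges(1)[of ?p A B])
  have "bg_iso (comp ?A1 (bg_map (redirect b a) ?B1))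
      (bg_map (redirect (?q (2 * b + 1)) (?q (2 * a + 1)) \<circ> ?q) (dsum ?A1 ?B1))"
    using comp_redirect_right_iso[OF wf1, of b a] unfolding q1 .
  also have "\<dots> = bg_contract (?q (2 * a + 1)) (?q (2 * b + 1)) (comp A B)"
    unfolding comp_eq_bg_map_dsum bg_contract_bg_map quot_dsum_restrict_edges[of ?p A B] ..
  finally have "bg_iso (comp ?A1 (bg_map (redirect b a) ?B1))
      (bg_contract (?q (2 * a + 1)) (?q (2 * b + 1)) (comp A B))" .
  moreover have "bminor B (bg_map (redirect b a) ?B1)"
    using assms by (intro bminor_contract_restricted) auto
  ultimately show thesis using that bminor_restrict_edges[OF assms(1)] by blast
qed

lemma comp_contract:
  assumes "wf_bgraph A" "wf_bgraph B" "{a, b} \<in> bg_edges (comp A B)" "a \<noteq> b"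
  obtains A' B' where "bminor A A'" "bminor B B'" "bg_iso (comp A' B') (bg_contract a b (comp A B))"
proof -
  let ?q = "quot A B"
  obtain e0 where e0: "e0 \<in> bg_edges (dsum A B)" "?q ` e0 = {a, b}"
    using assms(3) by (auto simp: comp_eq_bg_map_dsum)
  then consider (left) e1 where "e1 \<in> bg_edges A" "e0 = (\<lambda>x. 2 * x) ` e1"
    | (right) e1 where "e1 \<in> bg_edges B" "e0 = (\<lambda>x. 2 * x + 1) ` e1"
    by (cases A, cases B) (auto simp: dsum_def)
  then show thesis
  proof cases
    case left
    obtain c d where "e1 = {c, d}" using wf_bgraph_edgeD[OF assms(1) left(1)] by blast
    moreover have "(\<lambda>x. ?q (2 * x)) ` e1 = {a, b}" using e0(2) left(2) by (simp add: image_image)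
    ultimately obtain a1 b1 where ab1: "e1 = {a1, b1}" "?q (2 * a1) = a" "?q (2 * b1) = b"
      by (elim doubleton_image_eq)
    obtain A' B' where "bminor A A'" "bminor B B'"
      "bg_iso (comp A' B') (bg_contract (?q (2 * a1)) (?q (2 * b1)) (comp A B))"
      using left(1) ab1 assms(4) by (auto intro: comp_contract_left[OF assms(1,2)])
    then show thesis using ab1(2,3) by (intro that) simp_all
  next
    case right
    obtain c d where "e1 = {c, d}" using wf_bgraph_edgeD[OF assms(2) right(1)] by blast
    moreover have "(\<lambda>x. ?q (2 * x + 1)) ` e1 = {a, b}" using e0(2) right(2) by (simp add: image_image)
    ultimately obtain a1 b1 where ab1: "e1 = {a1, b1}" "?q (2 * a1 + 1) = a" "?q (2 * b1 + 1) = b"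
      by (elim doubleton_image_eq)
    obtain A' B' where "bminor A A'" "bminor B B'"
      "bg_iso (comp A' B') (bg_contract (?q (2 * a1 + 1)) (?q (2 * b1 + 1)) (comp A B))"
      using right(1) ab1 assms(4) by (auto intro: comp_contract_right[OF assms(1,2)])
    then show thesis using ab1(2,3) by (intro that) simp_all
  qed
qed

lemma quot_eq_unglued:
  assumes "y \<notin> Domain (glue A B) \<union> Range (glue A B)" "quot A B z = quot A B y"
  shows "z = y"
proof -
  have "equivclp (in_rel (glue A B)) y z"
    using assms(2) unfolding quot_def quot_map_eq_iff by (rule equivclp_sym)
  then show ?thesis using assms(1) by (intro equivclp_isolated) auto
qed

lemma comp_delete_vertex_left:
  assumes "wf_bgraph A" "wf_bgraph B" "a \<in> fst A" "a \<notin> set (bg_word A)"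
    and "2 * a \<notin> Domain (glue A B) \<union> Range (glue A B)"
  obtains A' where "bminor A A'" "comp A' B = bg_delete_vertex (quot A B (2 * a)) (comp A B)"
proof (rule that)
  show "bminor A (bg_delete_vertex a A)" using assms(3,4) by (intro bminor_stepI bminor_step_delete_vertex)
  have "2 * a \<in> fst (dsum A B)" using assms(3) by (simp add: dsum_def)
  then show "comp (bg_delete_vertex a A) B = bg_delete_vertex (quot A B (2 * a)) (comp A B)"
    unfolding comp_eq_bg_map_dsum quot_dsum_delete_vertex
    by (intro bg_delete_vertex_bg_map[symmetric] wf_bgraph_dsum assms(1,2) quot_eq_unglued[OF assms(5)])
qed

lemma comp_delete_vertex_right:
  assumes "wf_bgraph A" "wf_bgraph B" "b \<in> fst B" "b \<notin> set (bg_word B)"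
    and "2 * b + 1 \<notin> Domain (glue A B) \<union> Range (glue A B)"
  obtains B' where "bminor B B'" "comp A B' = bg_delete_vertex (quot A B (2 * b + 1)) (comp A B)"
proof (rule that)
  show "bminor B (bg_delete_vertex b B)" using assms(3,4) by (intro bminor_stepI bminor_step_delete_vertex)
  have "2 * b + 1 \<in> fst (dsum A B)" using assms(3) by (simp add: dsum_def)
  then show "comp A (bg_delete_vertex b B) = bg_delete_vertex (quot A B (2 * b + 1)) (comp A B)"
    unfolding comp_eq_bg_map_dsum quot_dsum_delete_vertex
    by (intro bg_delete_vertex_bg_map[symmetric] wf_bgraph_dsum assms(1,2) quot_eq_unglued[OF assms(5)])
qed

lemma set_bg_word_comp: "set (bg_word (comp A B)) = quot A B ` (set (lin A B) \<union> set (lout A B))"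
  by (simp add: comp_eq_bg_map_dsum dsum_def bg_word_eq image_Un)

end

definition series_glue :: "bgraph \<Rightarrow> bgraph \<Rightarrow> (nat \<times> nat) set" where
  "series_glue A B = set (zip (map (\<lambda>x. 2 * x) (bg_out A)) (map (\<lambda>x. 2 * x + 1) (bg_in B)))"

definition series_in :: "bgraph \<Rightarrow> bgraph \<Rightarrow> nat list" where
  "series_in A B = map (\<lambda>x. 2 * x) (bg_in A)"

definition series_out :: "bgraph \<Rightarrow> bgraph \<Rightarrow> nat list" where
  "series_out A B = map (\<lambda>x. 2 * x + 1) (bg_out B)"

definition parallel_glue :: "bgraph \<Rightarrow> bgraph \<Rightarrow> (nat \<times> nat) set" where
  "parallel_glue A B = set (zip (map (\<lambda>x. 2 * x) (bg_in A)) (map (\<lambda>x. 2 * x + 1) (bg_in B)))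
     \<union> set (zip (map (\<lambda>x. 2 * x) (bg_out A)) (map (\<lambda>x. 2 * x + 1) (bg_out B)))"

definition parallel_in :: "bgraph \<Rightarrow> bgraph \<Rightarrow> nat list" where
  "parallel_in A B = map (\<lambda>x. 2 * x) (bg_in A)"

definition parallel_out :: "bgraph \<Rightarrow> bgraph \<Rightarrow> nat list" where
  "parallel_out A B = map (\<lambda>x. 2 * x) (bg_out A)"

lemma map_prod_set_zip: "map_prod g g ` set (zip xs ys) = set (zip (map g xs) (map g ys))"
  by (simp add: zip_map_map map_prod_def)

lemma map_doubled:
  assumes "\<And>x. g (2 * x) = 2 * s x" "\<And>x. g (2 * x + 1) = 2 * t x + 1"
  shows "map g (map (\<lambda>x. 2 * x) l) = map (\<lambda>x. 2 * x) (map s l)"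
    "map g (map (\<lambda>x. 2 * x + 1) l) = map (\<lambda>x. 2 * x + 1) (map t l)"
  using assms by simp_all

interpretation series: bg_composition bg_series series_glue series_in series_out
proof
  fix A B :: bgraph
  show "bg_series A B = bg_map (quot_map (series_glue A B)) (bg_sum A B (series_in A B) (series_out A B))"
    by (cases A, cases B)
      (simp add: bg_series_def series_glue_def series_in_def series_out_def Let_def image_Un image_comp comp_def)
  show "set (series_in A B) \<union> set (series_out A B)
      \<subseteq> (\<lambda>x. 2 * x) ` set (bg_word A) \<union> (\<lambda>x. 2 * x + 1) ` set (bg_word B)"
    by (auto simp: series_in_def series_out_def bg_word_eq)
next
  fix A A' B B' :: bgraph
  assume "bg_in A' = bg_in A" "bg_out A' = bg_out A" "bg_in B' = bg_in B" "bg_out B' = bg_out B"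
  then show "series_glue A' B' = series_glue A B \<and> series_in A' B' = series_in A B \<and> series_out A' B' = series_out A B"
    by (simp add: series_glue_def series_in_def series_out_def)
next
  fix g s t :: "nat \<Rightarrow> nat" and A B :: bgraph
  assume "\<And>x. g (2 * x) = 2 * s x" "\<And>x. g (2 * x + 1) = 2 * t x + 1"
  then show "series_glue (bg_map s A) (bg_map t B) = map_prod g g ` series_glue A B \<and>
      series_in (bg_map s A) (bg_map t B) = map g (series_in A B) \<and>
      series_out (bg_map s A) (bg_map t B) = map g (series_out A B)"
    by (simp only: series_glue_def series_in_def series_out_def map_prod_set_zip map_doubled bg_labels_simps)
qed

interpretation parallel: bg_composition bg_parallel parallel_glue parallel_in parallel_out
proof
  fix A B :: bgraph
  show "bg_parallel A B = bg_map (quot_map (parallel_glue A B)) (bg_sum A B (parallel_in A B) (parallel_out A B))"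
    by (cases A, cases B)
      (simp add: bg_parallel_def parallel_glue_def parallel_in_def parallel_out_def Let_def image_Un image_comp comp_def)
  show "set (parallel_in A B) \<union> set (parallel_out A B)
      \<subseteq> (\<lambda>x. 2 * x) ` set (bg_word A) \<union> (\<lambda>x. 2 * x + 1) ` set (bg_word B)"
    by (auto simp: parallel_in_def parallel_out_def bg_word_eq)
next
  fix A A' B B' :: bgraph
  assume "bg_in A' = bg_in A" "bg_out A' = bg_out A" "bg_in B' = bg_in B" "bg_out B' = bg_out B"
  then show "parallel_glue A' B' = parallel_glue A B \<and> parallel_in A' B' = parallel_in A B
      \<and> parallel_out A' B' = parallel_out A B"
    by (simp add: parallel_glue_def parallel_in_def parallel_out_def)
next
  fix g s t :: "nat \<Rightarrow> nat" and A B :: bgraph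
  assume "\<And>x. g (2 * x) = 2 * s x" "\<And>x. g (2 * x + 1) = 2 * t x + 1"
  then show "parallel_glue (bg_map s A) (bg_map t B) = map_prod g g ` parallel_glue A B \<and>
      parallel_in (bg_map s A) (bg_map t B) = map g (parallel_in A B) \<and>
      parallel_out (bg_map s A) (bg_map t B) = map g (parallel_out A B)"
    by (simp only: parallel_glue_def parallel_in_def parallel_out_def image_Un map_prod_set_zip
        map_doubled bg_labels_simps)
qed

lemma bilabelled_series: "bilabelled k A \<Longrightarrow> bilabelled k B \<Longrightarrow> bilabelled k (bg_series A B)"
  by (cases A, cases B) (simp add: bg_series_def Let_def)

lemma bilabelled_parallel: "bilabelled k A \<Longrightarrow> bilabelled k (bg_parallel A B)"
  by (cases A, cases B) (simp add: bg_parallel_def Let_def)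

section \<open>The basic graphs\<close>

definition cycle_edges :: "nat \<Rightarrow> nat set set" where
  "cycle_edges k = {{i, i + 1} | i. i + 1 < k} \<union> {{i, i + 1} | i. k \<le> i \<and> i + 1 < 2 * k}
     \<union> (if 1 \<le> k then {{0, k}, {k - 1, 2 * k - 1}} else {})"

lemma bgC_eq: "bgC k = ({0..<2 * k}, cycle_edges k, [0..<k], [k..<2 * k])"
  by (simp add: bgC_def cycle_edges_def)

lemma cycle_edges_subset: "e \<in> cycle_edges k \<Longrightarrow> e \<subseteq> {0..<2 * k} \<and> (\<exists>x y. e = {x, y})"
  by (auto simp: cycle_edges_def split: if_splits)

lemma bgC_wf_bilabelled_all_labelled: "wf_bgraph (bgC k)" "bilabelled k (bgC k)" "all_labelled (bgC k)"
  using cycle_edges_subset by (auto simp: bgC_eq)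

lemma bgM_wf_bilabelled: "wf_bgraph (bgM k)" "bilabelled k (bgM k)"
  by (auto simp: bgM_def)

lemma bminor_of_iso_minor:
  assumes "wf_bgraph G0" "bminor G0 H" "bg_iso H G" "bminor G G'"
  obtains H' where "bminor G0 H'" "bg_iso H' G'"
proof -
  have "wf_bgraph H" using bminor_wf_bgraph_vertices[OF assms(2,1)] by simp
  then obtain H' where "bminor H H'" "bg_iso H' G'" using assms(3,4) by (rule bminor_bg_iso)
  then show thesis using that bminor_trans[OF assms(2)] by blast
qed

lemma QP_bminor: "H \<in> QP k \<Longrightarrow> bminor H H' \<Longrightarrow> H' \<in> QP k"
  unfolding QP_def using bminor_of_iso_minor[OF bgC_wf_bilabelled_all_labelled(1)] by blast

lemma QS_bminor: "H \<in> QS k \<Longrightarrow> bminor H H' \<Longrightarrow> H' \<in> QS k"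
  unfolding QS_def using bminor_of_iso_minor[OF bgM_wf_bilabelled(1)] by blast

lemma bminor_preserves:
  assumes "bminor F G" "wf_bgraph F" "bilabelled k F"
  shows "wf_bgraph G" "bilabelled k G" "all_labelled F \<Longrightarrow> all_labelled G"
  using assms bminor_invariant[OF assms(1)] wf_bgraph_bminor_step bilabelled_bminor_step
    all_labelled_bminor_step by metis+

lemma QP_wf_bilabelled_all_labelled:
  assumes "H \<in> QP k"
  shows "wf_bgraph H \<and> bilabelled k H \<and> all_labelled H"
proof -
  obtain H0 f where H0: "bminor (bgC k) H0" and H: "H = bg_map f H0"
    using assms unfolding QP_def bg_iso_iff by blast
  have "wf_bgraph H0" "bilabelled k H0" "all_labelled H0"
    using bminor_preserves[OF H0 bgC_wf_bilabelled_all_labelled(1,2)] bgC_wf_bilabelled_all_labelled(3) by blast+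
  then show ?thesis unfolding H by (simp add: wf_bgraph_bg_map bilabelled_bg_map all_labelled_bg_map)
qed

lemma QS_wf_bilabelled:
  assumes "H \<in> QS k"
  shows "wf_bgraph H \<and> bilabelled k H"
proof -
  obtain H0 f where H0: "bminor (bgM k) H0" and H: "H = bg_map f H0"
    using assms unfolding QS_def bg_iso_iff by blast
  have "wf_bgraph H0" "bilabelled k H0"
    using bminor_preserves[OF H0 bgM_wf_bilabelled(1,2)] by blast+
  then show ?thesis unfolding H by (simp add: wf_bgraph_bg_map bilabelled_bg_map)
qed

definition identify_labels :: "nat \<Rightarrow> nat \<Rightarrow> nat \<Rightarrow> bgraph" where
  "identify_labels k p p' = bg_map (redirect p' p) ({0..<2 * k}, {}, [0..<k], [k..<2 * k])"

lemma identify_labels_QP: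
  assumes "{p, p'} \<in> cycle_edges k" "p \<noteq> p'"
  shows "identify_labels k p p' \<in> QP k"
proof -
  have "bminor (bgC k) (bg_map (redirect p' p) (bg_restrict_edges (\<lambda>_. False) (bgC k)))"
    using assms by (intro bminor_contract_restricted bgC_wf_bilabelled_all_labelled(1)) (simp_all add: bgC_eq)
  then have "bminor (bgC k) (identify_labels k p p')"
    by (simp add: bgC_eq identify_labels_def del: bg_map_simps)
  then show ?thesis unfolding QP_def using bg_iso_refl by blast
qed

lemma cycle_edge_leaving:
  assumes "i0 < k" "T i0"
  obtains p p' where "{p, p'} \<in> cycle_edges k" "p \<noteq> p'" "p < 2 * k" "k \<le> p'" "p' < 2 * k"
    "T (p' - k)" "p < k \<or> \<not> T (p - k)"
proof (cases "\<forall>i<k. T i")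
  case True
  then show thesis using assms by (intro that[of 0 k]) (auto simp: cycle_edges_def)
next
  case False
  have "\<exists>i. i + 1 < k \<and> T i \<noteq> T (i + 1)"
  proof (rule ccontr)
    assume "\<not> ?thesis"
    then have "T i = T 0" if "i < k" for i
      using that by (induction i) auto
    then show False using False assms by blast
  qed
  then obtain i where i: "i + 1 < k" "T i \<noteq> T (i + 1)" by blast
  then have edge: "{k + i, k + i + 1} \<in> cycle_edges k" by (auto simp: cycle_edges_def)
  show thesis
  proof (cases "T i")
    case True
    then show thesis using i edge by (intro that[of "k + i + 1" "k + i"]) (auto simp: insert_commute)
  next
    case False
    then show thesis using i edge by (intro that[of "k + i" "k + i + 1"]) auto
  qed
qed

lemma parallel_glue_identify_labels:
  assumes "bilabelled k A"
  shows "parallel_glue A (identify_labels k p p')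
    = (\<lambda>t. (2 * bg_word A ! t, 2 * redirect p' p t + 1)) ` {0..<2 * k}"
proof -
  obtain V E u v where A: "A = (V, E, u, v)" by (cases A) auto
  have len: "length u = k" "length v = k" using assms A by simp_all
  have "[0..<2 * k] = [0..<k] @ [k..<2 * k]" using upt_add_eq_append[of 0 k k] by (simp add: mult_2)
  then have "parallel_glue A (identify_labels k p p')
      = set (zip (map (\<lambda>x. 2 * x) (u @ v)) (map (\<lambda>t. 2 * redirect p' p t + 1) [0..<2 * k]))"
    using len by (simp add: A parallel_glue_def identify_labels_def zip_append comp_def)
  also have "\<dots> = set (map (\<lambda>t. (2 * bg_word A ! t, 2 * redirect p' p t + 1)) [0..<2 * k])"
    using len by (intro arg_cong[where f = set] nth_equalityI) (simp_all add: A nth_append)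
  also have "\<dots> = (\<lambda>t. (2 * bg_word A ! t, 2 * redirect p' p t + 1)) ` {0..<2 * k}"
    by simp
  finally show ?thesis .
qed

text \<open>Sends a vertex of the disjoint sum of \<open>A\<close> and an edgeless graph to a vertex of \<open>A\<close>: the
  vertex \<open>2 * t + 1\<close> to the vertex carrying label \<open>t\<close> of \<open>A\<close>, with label word \<open>w\<close>.\<close>

definition sum_retract :: "nat list \<Rightarrow> nat \<Rightarrow> nat" where
  "sum_retract w y = (if even y then y div 2 else w ! (y div 2))"

lemma sum_retract_simps [simp]:
  "sum_retract w (2 * x) = x" "sum_retract w (2 * x + 1) = w ! x" "sum_retract w (Suc (2 * x)) = w ! x"
  by (simp_all add: sum_retract_def)

lemma parallel_identify_labels_kernel:
  assumes "bilabelled k A" "p < 2 * k" "p' < 2 * k"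
    and "y \<in> fst (parallel.dsum A (identify_labels k p p'))" "y' \<in> fst (parallel.dsum A (identify_labels k p p'))"
  shows "parallel.quot A (identify_labels k p p') y = parallel.quot A (identify_labels k p p') y'
    \<longleftrightarrow> redirect (bg_word A ! p') (bg_word A ! p) (sum_retract (bg_word A) y)
      = redirect (bg_word A ! p') (bg_word A ! p) (sum_retract (bg_word A) y')"
proof -
  let ?w = "bg_word A" and ?\<mu> = "redirect p' p" and ?X = "identify_labels k p p'"
  let ?\<rho> = "redirect (?w ! p') (?w ! p)" and ?q = "parallel.quot A ?X" and ?R = "parallel_glue A ?X"
  have glue: "(2 * ?w ! t, 2 * ?\<mu> t + 1) \<in> ?R" if "t < 2 * k" for t
    using that parallel_glue_identify_labels[OF assms(1)] by auto
  have q_glue: "?q (2 * ?w ! t) = ?q (2 * ?\<mu> t + 1)" if "t < 2 * k" for t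
    unfolding parallel.quot_def using glue[OF that] by (rule quot_map_eqI)
  have respects: "?\<rho> (sum_retract ?w a) = ?\<rho> (sum_retract ?w b)" if ab: "(a, b) \<in> ?R" for a b
  proof -
    obtain t where "a = 2 * ?w ! t" "b = 2 * ?\<mu> t + 1"
      using ab parallel_glue_identify_labels[OF assms(1)] by auto
    then show ?thesis by (cases "t = p'") (simp_all add: sum_retract_def)
  qed
  have retract: "?q z = ?q (2 * sum_retract ?w z)" if z: "z \<in> fst (parallel.dsum A ?X)" for z
  proof (cases "even z")
    case False
    then obtain t where t: "t < 2 * k" "z = 2 * ?\<mu> t + 1"
      using z by (cases A) (auto simp: parallel.dsum_def identify_labels_def)
    then have "?\<mu> (?\<mu> t) = ?\<mu> t" "?\<mu> t < 2 * k" using assms(2) by auto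
    then show ?thesis using q_glue[of "?\<mu> t"] t(2) by (simp add: sum_retract_def)
  qed (simp add: sum_retract_def)
  have "?q (2 * x) = ?q (2 * x')" if "?\<rho> x = ?\<rho> x'" for x x'
  proof (cases "x = x'")
    case False
    then have "{x, x'} = {?w ! p, ?w ! p'}" using that by (auto split: if_splits)
    moreover have "?q (2 * ?w ! p) = ?q (2 * ?w ! p')"
      using q_glue[OF assms(2)] q_glue[OF assms(3)] by simp
    ultimately show ?thesis by (auto simp: doubleton_eq_iff)
  qed simp
  moreover have "?\<rho> (sum_retract ?w y) = ?\<rho> (sum_retract ?w y')" if "?q y = ?q y'"
    using that unfolding parallel.quot_def quot_map_eq_iff by (rule equivclp_invariant) (rule respects)
  ultimately show ?thesis using retract[OF assms(4)] retract[OF assms(5)] by metis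
qed

lemma parallel_identify_labels_iso:
  assumes "wf_bgraph A" "bilabelled k A" "p < 2 * k" "p' < 2 * k"
  shows "bg_iso (bg_parallel A (identify_labels k p p')) (bg_map (redirect (bg_word A ! p') (bg_word A ! p)) A)"
proof -
  let ?w = "bg_word A" and ?X = "identify_labels k p p'" and ?\<mu> = "redirect p' p"
  let ?\<rho> = "redirect (?w ! p') (?w ! p)" and ?D = "parallel.dsum A (identify_labels k p p')"
  define f where "f = ?\<rho> \<circ> sum_retract ?w"
  obtain V E u v where A: "A = (V, E, u, v)" by (cases A) auto
  have "wf_bgraph ?X" unfolding identify_labels_def by (rule wf_bgraph_bg_map) simp
  then have "bg_iso (bg_map (parallel.quot A ?X) ?D) (bg_map f ?D)"
    unfolding f_def by (intro bg_iso_same_kernel parallel.wf_bgraph_dsum assms(1))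
      (simp_all only: comp_apply parallel_identify_labels_kernel[OF assms(2-4)])
  moreover have "bg_map f ?D = bg_map ?\<rho> A"
  proof -
    have D: "?D = ((\<lambda>x. 2 * x) ` V \<union> (\<lambda>t. 2 * ?\<mu> t + 1) ` {0..<2 * k},
        (\<lambda>e. (\<lambda>x. 2 * x) ` e) ` E, map (\<lambda>x. 2 * x) u, map (\<lambda>x. 2 * x) v)"
      by (simp add: A parallel.dsum_def parallel_in_def parallel_out_def identify_labels_def image_image)
    have label: "?w ! ?\<mu> t \<in> V" if "t < 2 * k" for t
      using that assms(1-3) A by (auto simp: nth_append)
    have "f (2 * ?\<mu> t + 1) \<in> ?\<rho> ` V" if "t < 2 * k" for t
      unfolding f_def comp_apply sum_retract_simps using label[OF that] by (rule imageI)
    then have "f ` (\<lambda>t. 2 * ?\<mu> t + 1) ` {0..<2 * k} \<subseteq> ?\<rho> ` V"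
      unfolding image_image by (intro image_subsetI) simp
    moreover have "f \<circ> (\<lambda>x. 2 * x) = ?\<rho>"
      by (simp add: f_def fun_eq_iff)
    ultimately show ?thesis unfolding D by (auto simp: A image_Un image_comp)
  qed
  ultimately show ?thesis by (simp add: parallel.comp_eq_bg_map_dsum)
qed

section \<open>Minor steps in compositions\<close>

lemma wf_bilabelled_restrict_edges:
  "wf_bgraph F \<Longrightarrow> wf_bgraph (bg_restrict_edges p F)" "bilabelled k (bg_restrict_edges p F) \<longleftrightarrow> bilabelled k F"
  by (cases F; simp)+

lemma nth_pair_in_set_zip: "i < length xs \<Longrightarrow> i < length ys \<Longrightarrow> (xs ! i, ys ! i) \<in> set (zip xs ys)"
  by (auto simp: in_set_zip)

lemma series_glue_unglued:
  "a \<notin> set (bg_out A) \<Longrightarrow> 2 * a \<notin> Domain (series_glue A B) \<union> Range (series_glue A B)"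
  "b \<notin> set (bg_in B) \<Longrightarrow> 2 * b + 1 \<notin> Domain (series_glue A B) \<union> Range (series_glue A B)"
proof -
  have "Domain (series_glue A B) \<subseteq> (\<lambda>x. 2 * x) ` set (bg_out A)"
    "Range (series_glue A B) \<subseteq> (\<lambda>x. 2 * x + 1) ` set (bg_in B)"
    unfolding series_glue_def by (auto dest: set_zip_leftD set_zip_rightD)
  then show "a \<notin> set (bg_out A) \<Longrightarrow> 2 * a \<notin> Domain (series_glue A B) \<union> Range (series_glue A B)"
    "b \<notin> set (bg_in B) \<Longrightarrow> 2 * b + 1 \<notin> Domain (series_glue A B) \<union> Range (series_glue A B)"
    by auto
qed

lemma series_quot_in_label:
  assumes "bilabelled k A" "bilabelled k B" "b \<in> set (bg_in B)"
  obtains i where "i < k" "series.quot A B (2 * b + 1) = series.quot A B (2 * bg_out A ! i)"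
proof -
  have len: "length (bg_out A) = k" "length (bg_in B) = k" using assms(1,2) by (cases A, cases B, simp)+
  then obtain i where i: "i < k" "b = bg_in B ! i" using assms(3) by (metis in_set_conv_nth)
  then have "(2 * bg_out A ! i, 2 * b + 1) \<in> series_glue A B"
    using len nth_pair_in_set_zip[of i "map (\<lambda>x. 2 * x) (bg_out A)" "map (\<lambda>x. 2 * x + 1) (bg_in B)"]
    unfolding series_glue_def by simp
  then show thesis using that i(1) unfolding series.quot_def by (metis quot_map_eqI)
qed

lemma series_labels:
  "set (bg_word (bg_series A B))
    = series.quot A B ` ((\<lambda>x. 2 * x) ` set (bg_in A) \<union> (\<lambda>x. 2 * x + 1) ` set (bg_out B))"
  by (simp add: series.set_bg_word_comp series_in_def series_out_def)

lemma parallel_glue_unglued: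
  "a \<notin> set (bg_word A) \<Longrightarrow> 2 * a \<notin> Domain (parallel_glue A B) \<union> Range (parallel_glue A B)"
proof -
  have "Domain (parallel_glue A B) \<subseteq> (\<lambda>x. 2 * x) ` set (bg_word A)"
    "Range (parallel_glue A B) \<subseteq> (\<lambda>x. 2 * x + 1) ` UNIV"
    unfolding parallel_glue_def bg_word_eq by (fastforce dest: set_zip_leftD set_zip_rightD)+
  then show "a \<notin> set (bg_word A) \<Longrightarrow> 2 * a \<notin> Domain (parallel_glue A B) \<union> Range (parallel_glue A B)"
    by auto
qed

lemma parallel_quot_label:
  assumes "bilabelled k A" "bilabelled k B" "b \<in> set (bg_word B)"
  obtains a where "a \<in> set (bg_word A)" "parallel.quot A B (2 * b + 1) = parallel.quot A B (2 * a)"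
proof -
  have len: "length (bg_in A) = k" "length (bg_out A) = k" "length (bg_in B) = k" "length (bg_out B) = k"
    using assms(1,2) by (cases A, cases B, simp)+
  have "\<exists>a \<in> set (bg_word A). (2 * a, 2 * b + 1) \<in> parallel_glue A B"
  proof (cases "b \<in> set (bg_in B)")
    case True
    then obtain i where "i < k" "b = bg_in B ! i" using len by (metis in_set_conv_nth)
    then show ?thesis
      using len nth_pair_in_set_zip[of i "map (\<lambda>x. 2 * x) (bg_in A)" "map (\<lambda>x. 2 * x + 1) (bg_in B)"]
      unfolding parallel_glue_def by (auto simp: bg_word_eq)
  next
    case False
    then obtain i where "i < k" "b = bg_out B ! i" using assms(3) len by (metis Un_iff bg_word_eq in_set_conv_nth set_append)
    then show ?thesis
      using len nth_pair_in_set_zip[of i "map (\<lambda>x. 2 * x) (bg_out A)" "map (\<lambda>x. 2 * x + 1) (bg_out B)"]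
      unfolding parallel_glue_def by (auto simp: bg_word_eq)
  qed
  then show thesis using that unfolding parallel.quot_def by (metis quot_map_eqI)
qed

lemma parallel_labels:
  "set (bg_word (bg_parallel A B)) = parallel.quot A B ` (\<lambda>x. 2 * x) ` set (bg_word A)"
  unfolding parallel.set_bg_word_comp parallel_in_def parallel_out_def by (simp add: bg_word_eq image_Un)

text \<open>Since
  \<open>x\<close> is not a label of \<open>A \<cdot> B\<close>, some edge of \<open>C\<^sub>k\<close> joins an out-label position \<open>p'\<close> of \<open>A\<close> mapped
  to \<open>x\<close> to a position \<open>p\<close> mapped elsewhere. Removing the edges at \<open>x\<close> and merging \<open>x\<close> into the
  image of label \<open>p\<close> deletes \<open>x\<close>, and the merge is a parallel composition of \<open>A\<close> with a
  member of \<open>Q\<^sup>P\<^sub>k\<close>.\<close>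

lemma series_delete_glued_vertex:
  assumes "wf_bgraph A" "wf_bgraph B" "bilabelled k A"
    and "x \<notin> set (bg_word (bg_series A B))" "i0 < k" "series.quot A B (2 * bg_out A ! i0) = x"
  obtains A1 B1 X A2 where "bminor A A1" "bminor B B1" "X \<in> QP k" "bg_iso (bg_parallel A1 X) A2"
    "bg_iso (bg_series A2 B1) (bg_delete_vertex x (bg_series A B))"
proof -
  let ?q = "series.quot A B" and ?w = "bg_word A"
  have len: "length (bg_in A) = k" "length (bg_out A) = k" using assms(3) by (cases A, simp)+
  obtain p p' where pp: "{p, p'} \<in> cycle_edges k" "p \<noteq> p'" "p < 2 * k" "k \<le> p'" "p' < 2 * k"
    "?q (2 * bg_out A ! (p' - k)) = x" "p < k \<or> ?q (2 * bg_out A ! (p - k)) \<noteq> x"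
    using assms(5,6) by (rule cycle_edge_leaving)
  have q_p': "?q (2 * ?w ! p') = x" using pp(4,6) len by (simp add: bg_word_eq nth_append)
  have q_p: "?q (2 * ?w ! p) \<noteq> x"
  proof (cases "p < k")
    case True
    then have "?q (2 * ?w ! p) \<in> set (bg_word (bg_series A B))"
      using len by (simp add: series.comp_eq_bg_map_dsum series.dsum_def series_in_def bg_word_eq nth_append)
    then show ?thesis using assms(4) by auto
  qed (use pp(7) len in \<open>simp add: bg_word_eq nth_append\<close>)
  have "?w ! p \<in> fst A" using assms(1) pp(3) len by (cases A) (auto simp: bg_word_eq nth_append)
  then have z: "?q (2 * ?w ! p) \<in> fst (bg_series A B)"
    by (cases A, cases B) (auto simp: series.comp_eq_bg_map_dsum series.dsum_def)
  let ?p = "\<lambda>e. x \<notin> ?q ` e"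
  let ?A1 = "bg_restrict_edges (\<lambda>e. ?p ((\<lambda>x. 2 * x) ` e)) A"
  let ?B1 = "bg_restrict_edges (\<lambda>e. ?p ((\<lambda>x. 2 * x + 1) ` e)) B"
  let ?X = "identify_labels k p p'" and ?A2 = "bg_map (redirect (?w ! p') (?w ! p)) ?A1"
  have wf1: "wf_bgraph ?A1" "wf_bgraph ?B1" "bilabelled k ?A1"
    using assms(1-3) by (simp_all add: wf_bilabelled_restrict_edges)
  have "bg_delete_vertex x (bg_series A B) = bg_map (redirect x (?q (2 * ?w ! p)) \<circ> ?q) (bg_restrict_edges ?p (series.dsum A B))"
    using assms(4) z q_p unfolding series.comp_eq_bg_map_dsum by (rule bg_delete_vertex_bg_map_merge)
  also have "\<dots> = bg_map (redirect (series.quot ?A1 ?B1 (2 * ?w ! p')) (series.quot ?A1 ?B1 (2 * ?w ! p))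
      \<circ> series.quot ?A1 ?B1) (series.dsum ?A1 ?B1)"
    unfolding series.quot_dsum_restrict_edges[of ?p A B] q_p' ..
  finally have "bg_iso (bg_series ?A2 ?B1) (bg_delete_vertex x (bg_series A B))"
    using series.comp_redirect_left_iso[OF wf1(1,2)] by simp
  moreover have "bg_iso (bg_parallel ?A1 ?X) ?A2"
    using parallel_identify_labels_iso[OF wf1(1,3) pp(3,5)] unfolding bg_labels_simps .
  moreover have "?X \<in> QP k" using pp(1,2) by (rule identify_labels_QP)
  ultimately show thesis using that bminor_restrict_edges assms(1,2) by blast
qed

lemma series_delete_vertex:
  assumes "wf_bgraph A" "wf_bgraph B" "bilabelled k A" "bilabelled k B"
    and "x \<in> fst (bg_series A B)" "x \<notin> set (bg_word (bg_series A B))"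
  shows "(\<exists>A' B'. bminor A A' \<and> bminor B B' \<and> bg_series A' B' = bg_delete_vertex x (bg_series A B))
    \<or> (\<exists>A1 B1 X A2. bminor A A1 \<and> bminor B B1 \<and> X \<in> QP k \<and> bg_iso (bg_parallel A1 X) A2
          \<and> bg_iso (bg_series A2 B1) (bg_delete_vertex x (bg_series A B)))"
proof (cases "\<exists>i<k. series.quot A B (2 * bg_out A ! i) = x")
  case True
  then obtain i where "i < k" "series.quot A B (2 * bg_out A ! i) = x" by blast
  with assms(1-3,6) obtain A1 B1 X A2 where "bminor A A1" "bminor B B1" "X \<in> QP k"
    "bg_iso (bg_parallel A1 X) A2" "bg_iso (bg_series A2 B1) (bg_delete_vertex x (bg_series A B))"
    by (rule series_delete_glued_vertex)
  then show ?thesis by blast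
next
  case False
  let ?q = "series.quot A B"
  have len: "length (bg_out A) = k" using assms(3) by (cases A) simp
  obtain y where y: "y \<in> fst (series.dsum A B)" "?q y = x"
    using assms(5) unfolding series.comp_eq_bg_map_dsum fst_bg_map by blast
  then consider (left) a where "a \<in> fst A" "y = 2 * a" | (right) b where "b \<in> fst B" "y = 2 * b + 1"
    by (auto simp: series.dsum_def)
  then show ?thesis
  proof cases
    case left
    have "a \<notin> set (bg_in A)" using assms(6) y(2) left(2) by (auto simp: series_labels)
    moreover have "a \<notin> set (bg_out A)" using False y(2) left(2) len by (metis in_set_conv_nth)
    ultimately obtain A' where "bminor A A'" "bg_series A' B = bg_delete_vertex x (bg_series A B)"
      using series.comp_delete_vertex_left[OF assms(1,2) left(1)] series_glue_unglued(1) y(2) left(2)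
      by (metis Un_iff bg_word_eq set_append)
    then show ?thesis using bminor_refl by blast
  next
    case right
    have "b \<notin> set (bg_out B)" using assms(6) y(2) right(2) by (auto simp: series_labels)
    moreover have "b \<notin> set (bg_in B)"
      using series_quot_in_label[OF assms(3,4)] False y(2) right(2) by metis
    ultimately obtain B' where "bminor B B'" "bg_series A B' = bg_delete_vertex x (bg_series A B)"
      using series.comp_delete_vertex_right[OF assms(1,2) right(1)] series_glue_unglued(2) y(2) right(2)
      by (metis Un_iff bg_word_eq set_append)
    then show ?thesis using bminor_refl by blast
  qed
qed

text \<open>In \<open>A \<parallel> B\<close> with \<open>B\<close> fully labelled, every vertex coming from \<open>B\<close> is glued to a labelled
  vertex, so an unlabelled vertex comes from an unlabelled vertex of \<open>A\<close>.\<close>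

lemma parallel_delete_vertex:
  assumes "wf_bgraph A" "wf_bgraph B" "bilabelled k A" "bilabelled k B" "all_labelled B"
    and "x \<in> fst (bg_parallel A B)" "x \<notin> set (bg_word (bg_parallel A B))"
  obtains A' where "bminor A A'" "bg_parallel A' B = bg_delete_vertex x (bg_parallel A B)"
proof -
  let ?q = "parallel.quot A B"
  have labels: "?q (2 * a) \<noteq> x" if "a \<in> set (bg_word A)" for a
    using that assms(7) by (auto simp: parallel_labels)
  obtain y where y: "y \<in> fst (parallel.dsum A B)" "?q y = x"
    using assms(6) unfolding parallel.comp_eq_bg_map_dsum fst_bg_map by blast
  then consider (left) a where "a \<in> fst A" "y = 2 * a" | (right) b where "b \<in> fst B" "y = 2 * b + 1"
    by (auto simp: parallel.dsum_def)
  then show thesis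
  proof cases
    case right
    then have "b \<in> set (bg_word B)" using assms(5) by (cases B) (auto simp: bg_word_eq)
    then show thesis using parallel_quot_label[OF assms(3,4)] labels y(2) right(2) by metis
  next
    case left
    then have "a \<notin> set (bg_word A)" using labels y(2) by blast
    then show thesis
      using parallel.comp_delete_vertex_left[OF assms(1,2) left(1)] parallel_glue_unglued y(2) left(2) that
      by metis
  qed
qed

lemma series_minor_step:
  assumes "wf_bgraph A" "wf_bgraph B" "bilabelled k A" "bilabelled k B" "bminor_step (bg_series A B) G"
  shows "(\<exists>A' B'. bminor A A' \<and> bminor B B' \<and> bg_iso (bg_series A' B') G)
    \<or> (\<exists>A1 B1 X A2. bminor A A1 \<and> bminor B B1 \<and> X \<in> QP k \<and> bg_iso (bg_parallel A1 X) A2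
          \<and> bg_iso (bg_series A2 B1) G)"
  using assms(5)
proof (cases rule: bminor_stepE)
  case (delete_edge e)
  then show ?thesis using series.comp_delete_edge[OF assms(1,2)] bg_iso_refl by metis
next
  case (delete_vertex x)
  then show ?thesis using series_delete_vertex[OF assms(1-4)] bg_iso_refl by metis
next
  case (contract a b)
  then show ?thesis using series.comp_contract[OF assms(1,2)] by metis
qed

lemma parallel_minor_step:
  assumes "wf_bgraph A" "bilabelled k A" "B \<in> QP k" "bminor_step (bg_parallel A B) G"
  obtains A' B' where "bminor A A'" "B' \<in> QP k" "bg_iso (bg_parallel A' B') G"
proof -
  have B: "wf_bgraph B" "bilabelled k B" "all_labelled B" using QP_wf_bilabelled_all_labelled[OF assms(3)] by blast+
  from assms(4) show thesis
  proof (cases rule: bminor_stepE)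
    case (delete_edge e)
    then show thesis using parallel.comp_delete_edge[OF assms(1) B(1)] QP_bminor[OF assms(3)] bg_iso_refl that
      by metis
  next
    case (delete_vertex x)
    then show thesis using parallel_delete_vertex[OF assms(1) B(1) assms(2) B(2,3)] assms(3) bg_iso_refl that
      by metis
  next
    case (contract a b)
    then show thesis using parallel.comp_contract[OF assms(1) B(1)] QP_bminor[OF assms(3)] that by metis
  qed
qed

section \<open>Rotations of the labels\<close>

lemma rot_group_permutes:
  assumes "\<sigma> \<in> rot_group k"
  shows "\<sigma> ` {0..<2 * k} = {0..<2 * k}"
proof -
  let ?c = "cyc_order k" and ?n = "2 * k"
  obtain r where r: "\<And>j. j < ?n \<Longrightarrow> \<sigma> (?c ! j) = ?c ! ((j + r) mod ?n)"
    using assms unfolding rot_group_def by blast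
  have c: "(!) ?c ` {0..<?n} = {0..<?n}"
    by (auto simp: nth_image cyc_order_def)
  have shift: "(\<lambda>j. (j + r) mod ?n) ` {0..<?n} = {0..<?n}"
  proof (intro equalityI subsetI)
    fix m assume m: "m \<in> {0..<?n}"
    define j where "j = (m + (?n - r mod ?n)) mod ?n"
    have "r mod ?n < ?n" "?n * (r div ?n) + r mod ?n = r" using m by simp_all
    then have eq: "m + (?n - r mod ?n) + r = m + (?n + ?n * (r div ?n))" by linarith
    have "(j + r) mod ?n = (m + (?n - r mod ?n) + r) mod ?n" by (simp only: j_def mod_add_left_eq)
    also have "\<dots> = m" using m by (simp only: eq mult_Suc_right[symmetric] mod_mult_self2) simp
    finally have "(j + r) mod ?n = m" .
    moreover have "j \<in> {0..<?n}" using m by (simp add: j_def)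
    ultimately show "m \<in> (\<lambda>j. (j + r) mod ?n) ` {0..<?n}" by force
  qed auto
  have "\<sigma> ` {0..<?n} = (\<lambda>j. \<sigma> (?c ! j)) ` {0..<?n}" by (subst c[symmetric]) (simp add: image_image)
  also have "\<dots> = (!) ?c ` (\<lambda>j. (j + r) mod ?n) ` {0..<?n}" using r by (simp add: image_image)
  finally show ?thesis by (simp only: shift c)
qed

lemma bg_perm_eq:
  "bg_perm \<sigma> F = (fst F, bg_edges F, map (\<lambda>i. bg_word F ! \<sigma> i) [0..<length (bg_in F)],
     map (\<lambda>i. bg_word F ! \<sigma> (length (bg_in F) + i)) [0..<length (bg_in F)])"
  by (cases F) (simp add: bg_perm_def)

lemma bg_perm_graph [simp]:
  "fst (bg_perm \<sigma> F) = fst F" "bg_edges (bg_perm \<sigma> F) = bg_edges F"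
  "bg_perm \<sigma> (bg_delete_edge e F) = bg_delete_edge e (bg_perm \<sigma> F)"
  "bg_perm \<sigma> (bg_delete_vertex x F) = bg_delete_vertex x (bg_perm \<sigma> F)"
  by (cases F; simp add: bg_perm_def)+

lemma bilabelled_bg_perm: "bilabelled k F \<Longrightarrow> bilabelled k (bg_perm \<sigma> F)"
  by (cases F) (simp add: bg_perm_def)

lemma bg_word_bg_perm:
  assumes "bilabelled k F"
  shows "bg_word (bg_perm \<sigma> F) = map (\<lambda>i. bg_word F ! \<sigma> i) [0..<2 * k]"
proof -
  have "length (bg_in F) = k" using assms by (cases F) simp
  then show ?thesis by (intro nth_equalityI) (auto simp: bg_perm_eq nth_append)
qed

lemma set_bg_word_bg_perm:
  assumes "\<sigma> ` {0..<2 * k} = {0..<2 * k}" "bilabelled k F"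
  shows "set (bg_word (bg_perm \<sigma> F)) = set (bg_word F)"
proof -
  have "length (bg_word F) = 2 * k" using assms(2) by (cases F) simp
  then have "set (bg_word F) = (!) (bg_word F) ` \<sigma> ` {0..<2 * k}" by (simp only: assms(1) nth_image) simp
  then show ?thesis by (simp add: bg_word_bg_perm[OF assms(2)] image_image)
qed

lemma bg_perm_bg_map:
  assumes "\<sigma> ` {0..<2 * k} = {0..<2 * k}" "bilabelled k F"
  shows "bg_perm \<sigma> (bg_map f F) = bg_map f (bg_perm \<sigma> F)"
proof -
  have len: "length (bg_in F) = k" "length (bg_word F) = 2 * k" using assms(2) by (cases F, simp)+
  have nth: "map f (bg_word F) ! \<sigma> i = f (bg_word F ! \<sigma> i)" if "i < 2 * k" for i
  proof -
    have "\<sigma> i \<in> \<sigma> ` {0..<2 * k}" using that by simp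
    then have "\<sigma> i < length (bg_word F)" using assms(1) len(2) by simp
    then show ?thesis by (rule nth_map)
  qed
  have "map (\<lambda>i. map f (bg_word F) ! \<sigma> i) [0..<k] = map (\<lambda>i. f (bg_word F ! \<sigma> i)) [0..<k]"
    "map (\<lambda>i. map f (bg_word F) ! \<sigma> (k + i)) [0..<k] = map (\<lambda>i. f (bg_word F ! \<sigma> (k + i))) [0..<k]"
    using nth by (simp_all add: map_eq_conv)
  then show ?thesis using len(1) by (cases F) (simp add: bg_perm_eq)
qed

lemma bminor_step_bg_perm:
  assumes "\<sigma> ` {0..<2 * k} = {0..<2 * k}" "bilabelled k F" "bminor_step (bg_perm \<sigma> F) G"
  obtains F' where "bminor_step F F'" "G = bg_perm \<sigma> F'"
  using assms(3)
proof (cases rule: bminor_stepE)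
  case (delete_edge e)
  then show thesis using that bminor_step_delete_edge[of e F] by simp
next
  case (delete_vertex x)
  then show thesis using that bminor_step_delete_vertex[of x F] set_bg_word_bg_perm[OF assms(1,2)] by simp
next
  case (contract a b)
  have "bilabelled k (bg_delete_edge {a, b} F)" using assms(2) by (cases F) simp
  then have "G = bg_perm \<sigma> (bg_contract a b F)"
    using contract(3) bg_perm_bg_map[OF assms(1)] by (simp add: bg_contract_def)
  then show thesis using that bminor_step_contract[of a b F] contract(1,2) by simp
qed

lemma bminor_bg_perm:
  assumes "\<sigma> ` {0..<2 * k} = {0..<2 * k}" "bilabelled k F" "bminor (bg_perm \<sigma> F) G"
  obtains F' where "bminor F F'" "G = bg_perm \<sigma> F'"
proof -
  have "\<exists>F'. bminor F F' \<and> G = bg_perm \<sigma> F'"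
    using assms(3) unfolding bminor_def
  proof (induction rule: rtranclp_induct)
    case base
    show ?case using bminor_refl by blast
  next
    case (step G G')
    then obtain F' where F': "bminor F F'" "G = bg_perm \<sigma> F'" by (auto simp: bminor_def)
    have "bilabelled k F'" using F'(1) by (rule bminor_invariant) (use assms(2) bilabelled_bminor_step in blast)+
    with assms(1) obtain F'' where F'': "bminor_step F' F''" "G' = bg_perm \<sigma> F''"
      using step.hyps(2) F'(2) by (auto elim: bminor_step_bg_perm)
    have "bminor F F''" using F'(1) bminor_stepI[OF F''(1)] by (rule bminor_trans)
    then show ?case using F''(2) unfolding bminor_def by blast
  qed
  then show thesis using that by blast
qed

section \<open>Closure of \<open>P\<^sub>k\<close> under minors\<close>

lemma wf_bgraph_bg_perm:
  assumes "\<sigma> ` {0..<2 * k} = {0..<2 * k}" "bilabelled k F" "wf_bgraph F"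
  shows "wf_bgraph (bg_perm \<sigma> F)"
proof -
  have "set (bg_in (bg_perm \<sigma> F)) \<union> set (bg_out (bg_perm \<sigma> F)) = set (bg_in F) \<union> set (bg_out F)"
    using set_bg_word_bg_perm[OF assms(1,2)] by (simp add: bg_word_eq)
  then show ?thesis using assms(3) by (cases F) (simp add: bg_perm_def, blast)
qed

lemma P_wf_bilabelled: "F \<in> P k \<Longrightarrow> wf_bgraph F \<and> bilabelled k F"
proof (induction rule: P.induct)
  case (base G)
  then show ?case using QP_wf_bilabelled_all_labelled QS_wf_bilabelled unfolding Q_def by blast
next
  case (series F F')
  then show ?case using series.wf_bgraph_comp bilabelled_series by blast
next
  case (parallel F H)
  then show ?case using parallel.wf_bgraph_comp bilabelled_parallel QP_wf_bilabelled_all_labelled by blast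
next
  case (perm F \<sigma>)
  then show ?case using wf_bgraph_bg_perm rot_group_permutes bilabelled_bg_perm by blast
next
  case (iso F G)
  then show ?case by (auto simp: bg_iso_iff wf_bgraph_bg_map bilabelled_bg_map)
qed

definition minors_in_P :: "nat \<Rightarrow> bgraph \<Rightarrow> bool" where
  "minors_in_P k F \<longleftrightarrow> (\<forall>G. bminor F G \<longrightarrow> G \<in> P k)"

lemma minors_in_P_imp_P: "minors_in_P k F \<Longrightarrow> F \<in> P k"
  unfolding minors_in_P_def using bminor_refl by blast

lemma minors_in_P_bminor: "minors_in_P k F \<Longrightarrow> bminor F G \<Longrightarrow> minors_in_P k G"
  unfolding minors_in_P_def using bminor_trans by blast

lemma minors_in_P_Q: "G \<in> Q k \<Longrightarrow> minors_in_P k G"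
  unfolding minors_in_P_def Q_def using QP_bminor QS_bminor P.base[unfolded Q_def] by blast

lemma minors_in_P_iso:
  assumes "minors_in_P k F" "bg_iso F G"
  shows "minors_in_P k G"
  unfolding minors_in_P_def
proof (intro allI impI)
  fix G' assume "bminor G G'"
  have "wf_bgraph F" using P_wf_bilabelled minors_in_P_imp_P[OF assms(1)] by blast
  then obtain F' where "bminor F F'" "bg_iso F' G'" using assms(2) \<open>bminor G G'\<close> by (rule bminor_bg_iso)
  then show "G' \<in> P k" using assms(1) P.iso unfolding minors_in_P_def by blast
qed

lemma minors_in_P_perm:
  assumes "minors_in_P k F" "\<sigma> \<in> rot_group k"
  shows "minors_in_P k (bg_perm \<sigma> F)"
  unfolding minors_in_P_def
proof (intro allI impI)
  fix G assume "bminor (bg_perm \<sigma> F) G"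
  moreover have "bilabelled k F" using P_wf_bilabelled minors_in_P_imp_P[OF assms(1)] by blast
  ultimately obtain F' where "bminor F F'" "G = bg_perm \<sigma> F'"
    using rot_group_permutes[OF assms(2)] by (elim bminor_bg_perm)
  then show "G \<in> P k" using assms P.perm minors_in_P_bminor minors_in_P_imp_P by metis
qed

lemma minors_in_P_parallel:
  assumes "minors_in_P k F" "H \<in> QP k"
  shows "minors_in_P k (bg_parallel F H)"
proof -
  have reach: "\<exists>F' H'. minors_in_P k F' \<and> H' \<in> QP k \<and> bg_iso (bg_parallel F' H') G"
    if "bminor (bg_parallel F H) G" for G
    using that unfolding bminor_def
  proof (induction rule: rtranclp_induct)
    case base
    then show ?case using assms bg_iso_refl by blast
  next
    case (step G G')
    then obtain F' H' where FH: "minors_in_P k F'" "H' \<in> QP k" "bg_iso (bg_parallel F' H') G" by blast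
    have F': "wf_bgraph F'" "bilabelled k F'" using P_wf_bilabelled minors_in_P_imp_P[OF FH(1)] by blast+
    then have "wf_bgraph (bg_parallel F' H')" using parallel.wf_bgraph_comp QP_wf_bilabelled_all_labelled[OF FH(2)] by blast
    then obtain Z where Z: "bminor_step (bg_parallel F' H') Z" "bg_iso Z G'"
      using FH(3) step.hyps(2) by (rule bminor_step_bg_iso)
    obtain F'' H'' where "bminor F' F''" "H'' \<in> QP k" "bg_iso (bg_parallel F'' H'') Z"
      using F' FH(2) Z(1) by (rule parallel_minor_step)
    then show ?case using minors_in_P_bminor[OF FH(1)] bg_iso_trans Z(2) by blast
  qed
  show ?thesis unfolding minors_in_P_def
  proof (intro allI impI)
    fix G assume "bminor (bg_parallel F H) G"
    then obtain F' H' where "minors_in_P k F'" "H' \<in> QP k" "bg_iso (bg_parallel F' H') G"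
      using reach by blast
    then show "G \<in> P k" by (meson P.parallel P.iso minors_in_P_imp_P)
  qed
qed

lemma minors_in_P_series:
  assumes "minors_in_P k A" "minors_in_P k B"
  shows "minors_in_P k (bg_series A B)"
proof -
  have reach: "\<exists>A' B'. minors_in_P k A' \<and> minors_in_P k B' \<and> bg_iso (bg_series A' B') G"
    if "bminor (bg_series A B) G" for G
    using that unfolding bminor_def
  proof (induction rule: rtranclp_induct)
    case base
    then show ?case using assms bg_iso_refl by blast
  next
    case (step G G')
    then obtain A' B' where AB: "minors_in_P k A'" "minors_in_P k B'" "bg_iso (bg_series A' B') G" by blast
    have A': "wf_bgraph A'" "bilabelled k A'" and B': "wf_bgraph B'" "bilabelled k B'"
      using P_wf_bilabelled minors_in_P_imp_P AB(1,2) by blast+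
    then have "wf_bgraph (bg_series A' B')" by (intro series.wf_bgraph_comp)
    then obtain Z where Z: "bminor_step (bg_series A' B') Z" "bg_iso Z G'"
      using AB(3) step.hyps(2) by (rule bminor_step_bg_iso)
    from series_minor_step[OF A'(1) B'(1) A'(2) B'(2) Z(1)] show ?case
    proof (elim disjE exE conjE)
      fix A'' B'' assume "bminor A' A''" "bminor B' B''" "bg_iso (bg_series A'' B'') Z"
      then show ?case using minors_in_P_bminor AB(1,2) bg_iso_trans Z(2) by blast
    next
      fix A1 B1 X A2 assume h: "bminor A' A1" "bminor B' B1" "X \<in> QP k" "bg_iso (bg_parallel A1 X) A2"
        "bg_iso (bg_series A2 B1) Z"
      have "minors_in_P k A2"
        using minors_in_P_iso[OF minors_in_P_parallel[OF minors_in_P_bminor[OF AB(1) h(1)] h(3)] h(4)] .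
      then show ?case using minors_in_P_bminor[OF AB(2) h(2)] bg_iso_trans[OF h(5) Z(2)] by blast
    qed
  qed
  show ?thesis unfolding minors_in_P_def
  proof (intro allI impI)
    fix G assume "bminor (bg_series A B) G"
    then obtain A' B' where "minors_in_P k A'" "minors_in_P k B'" "bg_iso (bg_series A' B') G"
      using reach by blast
    then show "G \<in> P k" by (meson P.series P.iso minors_in_P_imp_P)
  qed
qed

lemma P_minors_in_P: "F \<in> P k \<Longrightarrow> minors_in_P k F"
proof (induction rule: P.induct)
  case (base G)
  then show ?case by (rule minors_in_P_Q)
next
  case (series F F')
  then show ?case using minors_in_P_series by blast
next
  case (parallel F H)
  then show ?case using minors_in_P_parallel by blast
next
  case (perm F \<sigma>)
  then show ?case using minors_in_P_perm by blast
next
  case (iso F G)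
  then show ?case using minors_in_P_iso by blast
qed

theorem lemma4p8:
  fixes k :: nat and F G :: bgraph
  assumes "F \<in> P k" and "bminor F G"
  shows "G \<in> P k"
  using P_minors_in_P[OF assms(1)] assms(2) unfolding minors_in_P_def by blast

end
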